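(* Let $\Lambda$ be an abelian group and $\mathrm{Coc}=\{c:V\to\prod_{\mathbf{Q}_2}\Lambda:\ c_{vw}=c_v\cdot c_w^v\ \forall v,w\in V\}$, where $c_w^v(x)=c_w(v^{-1}x)$. Then: (1) with the pointwise product $(c\cdot d)_v(x)=c_v(x)d_v(x)$, $\mathrm{Coc}$ is an abelian group; (2) for each $\zeta\in\Lambda$, $s(\zeta)_v(x)=\zeta^{\log_2(v'(v^{-1}x))}$ defines an element of $\mathrm{Coc}$; (3) for every $c\in\mathrm{Coc}$ there exist $\zeta\in\Lambda$ and $f\in\prod_{\mathbf{Q}_2}\Lambda$ with $c_v=s(\zeta)_v\cdot f(f^v)^{-1}$ for all $v\in V$, and the pair $(\zeta,f)$ is unique up to multiplying $f$ by a constant map; (4) the assignment $c\mapsto(\zeta,f)$ is a group isomorphism from $\mathrm{Coc}$ onto $\Lambda\times\big(\prod_{\mathbf{Q}_2}\Lambda\big)/\Lambda$ (with $\Lambda$ embedded as constant maps).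
   Context: Cantor space $\mathfrak C=\{0,1\}^{\mathbf N}$; $C_m=\{m\cdot x\}$. Thompson's group $V$: homeomorphisms $v$ with $v(m_kx)=m'_kx$ for partitions $\mathfrak C=\bigsqcup C_{m_k}=\bigsqcup C_{m'_k}$; slope $v'(x)=2^{|m_k|-|m'_k|}$ on $C_{m_k}$. $\mathbf{Q}_2\subset\mathfrak C$: eventually-zero sequences (a $V$-invariant set). For $f\in\prod_{\mathbf{Q}_2}\Lambda$, $f^v(x)=f(v^{-1}x)$. *)

theory Defs
  imports "HOL-Algebra.Algebra" "HOL-Algebra.Product_Groups"
begin

type_synonym cantor = "nat \<Rightarrow> bool"

definition pre :: "bool list \<Rightarrow> cantor \<Rightarrow> cantor" where
  "pre m x = (\<lambda>n. if n < length m then m ! n else x (n - length m))"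

definition cyl :: "bool list \<Rightarrow> cantor set" where
  "cyl m = range (pre m)"

definition cyl_partition :: "bool list list \<Rightarrow> bool" where
  "cyl_partition ms \<longleftrightarrow> (\<forall>x. \<exists>!k. k < length ms \<and> x \<in> cyl (ms ! k))"

definition represents :: "(cantor \<Rightarrow> cantor) \<Rightarrow> bool list list \<Rightarrow> bool list list \<Rightarrow> bool" where
  "represents v ms ms' \<longleftrightarrow> length ms = length ms' \<and> cyl_partition ms \<and> cyl_partition ms' \<and>
     (\<forall>k < length ms. \<forall>x. v (pre (ms ! k) x) = pre (ms' ! k) x)"

definition thompsonV :: "(cantor \<Rightarrow> cantor) set" where
  "thompsonV = {v. bij v \<and> (\<exists>ms ms'. represents v ms ms')}"

text \<open>log_2 of the slope v'(x): on C_{m_k}, v'(x) = 2^(|m_k| - |m'_k|), so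
  log_2 v'(x) = |m_k| - |m'_k| (independent of the chosen representation)\<close>
definition log2_slope :: "(cantor \<Rightarrow> cantor) \<Rightarrow> cantor \<Rightarrow> int" where
  "log2_slope v x = (SOME d. \<exists>ms ms'. represents v ms ms' \<and>
      (\<exists>k < length ms. x \<in> cyl (ms ! k) \<and> d = int (length (ms ! k)) - int (length (ms' ! k))))"

definition slope :: "(cantor \<Rightarrow> cantor) \<Rightarrow> cantor \<Rightarrow> real" where
  "slope v x = 2 powi log2_slope v x"

definition Q2 :: "cantor set" where
  "Q2 = {x. \<exists>N. \<forall>n\<ge>N. \<not> x n}"

definition PQ :: "('a, 'b) monoid_scheme \<Rightarrow> (cantor \<Rightarrow> 'a) monoid" where
  "PQ L = product_group Q2 (\<lambda>_. L)"

definition constQ :: "('a, 'b) monoid_scheme \<Rightarrow> (cantor \<Rightarrow> 'a) set" where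
  "constQ L = (\<lambda>z. \<lambda>x\<in>Q2. z) ` carrier L"

definition Coc :: "('a, 'b) monoid_scheme \<Rightarrow> ((cantor \<Rightarrow> cantor) \<Rightarrow> cantor \<Rightarrow> 'a) set" where
  "Coc L = {c \<in> (\<Pi>\<^sub>E v\<in>thompsonV. \<Pi>\<^sub>E x\<in>Q2. carrier L).
      \<forall>v\<in>thompsonV. \<forall>w\<in>thompsonV. \<forall>x\<in>Q2.
        c (v \<circ> w) x = c v x \<otimes>\<^bsub>L\<^esub> c w (inv_into UNIV v x)}"

definition CocG :: "('a, 'b) monoid_scheme \<Rightarrow> ((cantor \<Rightarrow> cantor) \<Rightarrow> cantor \<Rightarrow> 'a) monoid" where
  "CocG L = (product_group thompsonV (\<lambda>_. PQ L)) \<lparr>carrier := Coc L\<rparr>"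

definition sC :: "('a, 'b) monoid_scheme \<Rightarrow> 'a \<Rightarrow> (cantor \<Rightarrow> cantor) \<Rightarrow> cantor \<Rightarrow> 'a" where
  "sC L z = (\<lambda>v\<in>thompsonV. \<lambda>x\<in>Q2. z [^]\<^bsub>L\<^esub> log2_slope v (inv_into UNIV v x))"

definition decomp :: "('a, 'b) monoid_scheme \<Rightarrow> ((cantor \<Rightarrow> cantor) \<Rightarrow> cantor \<Rightarrow> 'a) \<Rightarrow> 'a \<Rightarrow> (cantor \<Rightarrow> 'a) \<Rightarrow> bool" where
  "decomp L c z f \<longleftrightarrow> (\<forall>v\<in>thompsonV. \<forall>x\<in>Q2.
      c v x = sC L z v x \<otimes>\<^bsub>L\<^esub> f x \<otimes>\<^bsub>L\<^esub> inv\<^bsub>L\<^esub> (f (inv_into UNIV v x)))"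

definition Phi :: "('a, 'b) monoid_scheme \<Rightarrow> ((cantor \<Rightarrow> cantor) \<Rightarrow> cantor \<Rightarrow> 'a) \<Rightarrow> 'a \<times> (cantor \<Rightarrow> 'a) set" where
  "Phi L c = (let p = (SOME p. fst p \<in> carrier L \<and> snd p \<in> carrier (PQ L) \<and> decomp L c (fst p) (snd p))
              in (fst p, constQ L #>\<^bsub>PQ L\<^esub> snd p))"

end

theory Submission
  imports Defs "HOL-Library.Sublist"
begin

text \<open>
  For a cocycle \<open>c\<close>, the map \<open>h \<mapsto> c\<^sub>h(0\<^sup>\<infinity>)\<close> is a homomorphism from the stabiliser of
  \<open>0\<^sup>\<infinity>\<close> in \<open>V\<close> to \<open>\<Lambda>\<close>. Every such homomorphism into an abelian group is a power of the
  germ of the slope at \<open>0\<^sup>\<infinity>\<close>: a swap of two cylinders avoiding \<open>0\<^sup>\<infinity>\<close> is the square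
  of a product of two involutions and is therefore killed, and after composing with swaps and with
  an element \<open>\<tau>\<close> of slope 2 at \<open>0\<^sup>\<infinity>\<close> (induction on the size of a complete prefix code)
  every stabiliser element becomes a permutation of the cylinders of a fixed code, i.e. a
  product of such swaps. Hence for \<open>\<zeta> = c\<^sub>\<tau>(0\<^sup>\<infinity>)\<close> the cocycle \<open>c \<cdot> s(\<zeta>)\<^sup>-\<^sup>1\<close> is trivial on
  the stabiliser, and since \<open>V\<close> acts transitively on \<open>Q\<^sub>2\<close> it is the coboundary of
  \<open>f(x) = c\<^sub>g(x) s(\<zeta>)\<^sub>g(x)\<^sup>-\<^sup>1\<close> for any \<open>g \<in> V\<close> with \<open>g(0\<^sup>\<infinity>) = x\<close>. Evaluating a
  decomposition at \<open>\<tau>\<close> recovers \<open>\<zeta>\<close>, and a coboundary determines \<open>f\<close> up to a constant;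
  this gives uniqueness and the isomorphism.
\<close>

section \<open>Words and cylinders\<close>

definition shift :: "nat \<Rightarrow> cantor \<Rightarrow> cantor" where
  "shift k x = (\<lambda>i. x (i + k))"

definition zeros :: cantor where
  "zeros = (\<lambda>_. False)"

text \<open>Inside group contexts \<open>inv\<close> is the group inverse, hence a separate name for \<open>inv_into UNIV\<close>.\<close>
abbreviation finv :: "('a \<Rightarrow> 'b) \<Rightarrow> 'b \<Rightarrow> 'a" where
  "finv f \<equiv> inv_into UNIV f"

lemma in_cyl_iff: "x \<in> cyl m \<longleftrightarrow> (\<forall>i<length m. x i = m ! i)"
proof
  assume "x \<in> cyl m"
  then show "\<forall>i<length m. x i = m ! i" by (auto simp: cyl_def pre_def)
next
  assume "\<forall>i<length m. x i = m ! i"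
  then have "x = pre m (shift (length m) x)" by (auto simp: pre_def shift_def)
  then show "x \<in> cyl m" by (auto simp: cyl_def)
qed

lemma pre_in_cyl [simp]: "pre m y \<in> cyl m"
  by (simp add: cyl_def)

lemma pre_shift: "x \<in> cyl m \<Longrightarrow> pre m (shift (length m) x) = x"
  by (auto simp: in_cyl_iff pre_def shift_def)

lemma shift_pre [simp]: "shift (length m) (pre m y) = y"
  by (auto simp: pre_def shift_def)

lemma shift_pre_length: "length m = k \<Longrightarrow> shift k (pre m y) = y"
  by (simp add: shift_def pre_def)

lemma pre_Nil [simp]: "pre [] y = y"
  by (simp add: pre_def)

lemma pre_append: "pre (a @ b) y = pre a (pre b y)"
  by (auto simp: pre_def nth_append)

lemma pre_Cons: "pre (e # m) y = pre [e] (pre m y)"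
  using pre_append[of "[e]" m] by simp

lemma in_cyl_map_upt: "x \<in> cyl (map x [0..<n])"
  by (simp add: in_cyl_iff)

lemma in_cyl_pre_iff:
  assumes "length a \<le> length m"
  shows "pre m y \<in> cyl a \<longleftrightarrow> prefix a m"
proof -
  have "pre m y \<in> cyl a \<longleftrightarrow> take (length a) m = a"
    using assms by (auto simp: in_cyl_iff pre_def list_eq_iff_nth_eq)
  also have "\<dots> \<longleftrightarrow> prefix a m"
  proof
    assume "take (length a) m = a"
    then show "prefix a m" by (metis take_is_prefix)
  qed (auto simp: prefix_def)
  finally show ?thesis .
qed

lemma pre_in_cyl_append_iff: "pre a y \<in> cyl (a @ r) \<longleftrightarrow> y \<in> cyl r"
proof
  assume "pre a y \<in> cyl (a @ r)"
  then have "pre a y (length a + i) = (a @ r) ! (length a + i)" if "i < length r" for i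
    using that by (simp add: in_cyl_iff)
  then show "y \<in> cyl r"
    by (simp add: in_cyl_iff pre_def)
next
  assume "y \<in> cyl r"
  then show "pre a y \<in> cyl (a @ r)"
    by (simp add: in_cyl_iff pre_def nth_append)
qed

lemma pre_Cons_in_cyl_Cons_iff: "pre (a # r) y \<in> cyl (b # s) \<longleftrightarrow> a = b \<and> pre r y \<in> cyl s"
proof -
  have "pre (a # r) y (Suc i) = pre r y i" for i
    by (simp add: pre_def)
  moreover have "pre (a # r) y 0 = a"
    by (simp add: pre_def)
  ultimately show ?thesis
    unfolding in_cyl_iff by (simp add: All_less_Suc2)
qed

lemma in_cyl_split:
  assumes "x \<in> cyl u"
  shows "\<exists>e y. x = pre (u @ [e]) y"
proof -
  have s: "shift (length u) x = pre [x (length u)] (shift (Suc (length u)) x)"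
    by (auto simp: fun_eq_iff pre_def shift_def)
  have "pre (u @ [x (length u)]) (shift (Suc (length u)) x) = x"
    using pre_shift[OF assms] unfolding s pre_append .
  then show ?thesis
    by (intro exI) (rule sym)
qed

lemma prefix_pre_in_cyl: "prefix a m \<Longrightarrow> pre m y \<in> cyl a"
  by (auto simp: prefix_def pre_append)

lemma cyl_append_subset: "cyl (a @ b) \<subseteq> cyl a"
  by (auto simp: in_cyl_iff nth_append)

lemma in_cyl_prefix:
  assumes "x \<in> cyl a" "x \<in> cyl b" "length a \<le> length b"
  shows "prefix a b"
proof -
  have "pre b (shift (length b) x) \<in> cyl a" using assms pre_shift by simp
  then show ?thesis using assms(3) in_cyl_pre_iff by blast
qed

lemma in_cyl_same_length: "x \<in> cyl a \<Longrightarrow> x \<in> cyl b \<Longrightarrow> length a = length b \<Longrightarrow> a = b"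
  by (auto simp: in_cyl_iff list_eq_iff_nth_eq)

lemma parallel_cyl_disjoint: "a \<parallel> b \<Longrightarrow> cyl a \<inter> cyl b = {}"
  by (metis disjoint_iff in_cyl_prefix nle_le parallelE)

lemma pre_notin_parallel_cyl: "a \<parallel> b \<Longrightarrow> pre b y \<notin> cyl a"
  using parallel_cyl_disjoint pre_in_cyl by blast

lemma pre_eq_imp_eq:
  assumes "\<And>y. pre a y = pre b y"
  shows "a = b"
proof -
  have "prefix a b \<or> prefix b a"
    using assms in_cyl_prefix pre_in_cyl by (metis nle_le)
  moreover have "\<not> strict_prefix a b" "\<not> strict_prefix b a"
  proof -
    have "pre c (\<lambda>_. \<not> d ! length c) \<noteq> pre d (\<lambda>_. \<not> d ! length c)"
      if "strict_prefix c d" for c d :: "bool list"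
    proof -
      have "length c < length d" using that prefix_length_less by blast
      then show ?thesis by (auto simp: pre_def fun_eq_iff intro!: exI[of _ "length c"])
    qed
    then show "\<not> strict_prefix a b" "\<not> strict_prefix b a"
      using assms by metis+
  qed
  ultimately show ?thesis by (auto simp: strict_prefix_def)
qed

lemma pre_in_Q2_iff: "pre m y \<in> Q2 \<longleftrightarrow> y \<in> Q2"
proof
  assume "pre m y \<in> Q2"
  then obtain N where N: "\<forall>n\<ge>N. \<not> pre m y n" by (auto simp: Q2_def)
  then have "\<forall>n\<ge>N. \<not> y n"
  proof (intro allI impI)
    fix n assume "n \<ge> N"
    then have "\<not> pre m y (n + length m)" using N by simp
    then show "\<not> y n" by (simp add: pre_def)
  qed
  then show "y \<in> Q2" by (auto simp: Q2_def)
next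
  assume "y \<in> Q2"
  then obtain N where "\<forall>n\<ge>N. \<not> y n" by (auto simp: Q2_def)
  then have "\<forall>n\<ge>N + length m. \<not> pre m y n" by (simp add: pre_def)
  then show "pre m y \<in> Q2" by (auto simp: Q2_def)
qed

lemma zeros_in_Q2: "zeros \<in> Q2"
  by (simp add: Q2_def zeros_def)

lemma pre_replicate_zeros: "pre (replicate k False) zeros = zeros"
  by (auto simp: pre_def zeros_def)

lemma pre_zeros_eq_zeros_iff: "pre m zeros = zeros \<longleftrightarrow> m = replicate (length m) False"
proof
  assume eq: "pre m zeros = zeros"
  have "m ! i = False" if "i < length m" for i
    using fun_cong[OF eq, of i] that by (simp add: pre_def zeros_def)
  then show "m = replicate (length m) False" by (simp add: list_eq_iff_nth_eq)
next
  assume "m = replicate (length m) False"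
  then show "pre m zeros = zeros" using pre_replicate_zeros by (rule ssubst)
qed

lemma zeros_in_cyl_False: "zeros \<in> cyl [False]"
  by (simp add: in_cyl_iff zeros_def)

section \<open>Thompson's group and the slope\<close>

definition maps_prefix :: "(cantor \<Rightarrow> cantor) \<Rightarrow> bool list \<Rightarrow> bool list \<Rightarrow> bool" where
  "maps_prefix g a b \<longleftrightarrow> (\<forall>y. g (pre a y) = pre b y)"

lemma maps_prefix_id: "maps_prefix id a a"
  by (simp add: maps_prefix_def)

lemma maps_prefix_comp: "maps_prefix g a b \<Longrightarrow> maps_prefix h b c \<Longrightarrow> maps_prefix (h \<circ> g) a c"
  by (simp add: maps_prefix_def)

lemma maps_prefix_append: "maps_prefix g a b \<Longrightarrow> maps_prefix g (a @ r) (b @ r)"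
  by (simp add: maps_prefix_def pre_append)

lemma maps_prefix_unique: "maps_prefix g a b \<Longrightarrow> maps_prefix g a b' \<Longrightarrow> b = b'"
  by (metis maps_prefix_def pre_eq_imp_eq)

lemma maps_prefix_inj: "inj g \<Longrightarrow> maps_prefix g a b \<Longrightarrow> maps_prefix g a' b \<Longrightarrow> a = a'"
  unfolding maps_prefix_def by (metis injD pre_eq_imp_eq)

lemma maps_prefix_finv: "bij g \<Longrightarrow> maps_prefix g a b \<Longrightarrow> maps_prefix (finv g) b a"
  unfolding maps_prefix_def by (metis bij_is_inj inv_into_f_f UNIV_I)

lemma maps_prefix_cyl: "maps_prefix g a b \<Longrightarrow> x \<in> cyl a \<Longrightarrow> g x \<in> cyl b"
  unfolding maps_prefix_def by (metis pre_in_cyl pre_shift)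

definition acts_at_depth :: "nat \<Rightarrow> (cantor \<Rightarrow> cantor) \<Rightarrow> bool" where
  "acts_at_depth n g \<longleftrightarrow> (\<forall>m. length m = n \<longrightarrow> (\<exists>m'. maps_prefix g m m'))"

lemma acts_at_depth_mono:
  assumes "acts_at_depth n g" "n \<le> N"
  shows "acts_at_depth N g"
  unfolding acts_at_depth_def
proof (intro allI impI)
  fix m :: "bool list"
  assume "length m = N"
  then have "length (take n m) = n"
    using assms(2) by simp
  then obtain m' where "maps_prefix g (take n m) m'"
    using assms(1) unfolding acts_at_depth_def by blast
  then have "maps_prefix g (take n m @ drop n m) (m' @ drop n m)"
    by (rule maps_prefix_append)
  then have "maps_prefix g m (m' @ drop n m)"
    by simp
  then show "\<exists>m'. maps_prefix g m m'" ..
qed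

lemma represents_imp_acts_at_depth:
  assumes "represents v ms ms'"
  shows "acts_at_depth (Max (length ` set ms)) v"
  unfolding acts_at_depth_def
proof (intro allI impI)
  fix m :: "bool list"
  assume m: "length m = Max (length ` set ms)"
  obtain k where k: "k < length ms" "pre m zeros \<in> cyl (ms ! k)"
    using assms unfolding represents_def cyl_partition_def by blast
  have "length (ms ! k) \<le> length m"
    unfolding m using k(1) by (simp add: Max_ge)
  then obtain r where r: "m = ms ! k @ r"
    using k(2) in_cyl_pre_iff by (auto simp: prefix_def)
  have "maps_prefix v (ms ! k) (ms' ! k)"
    using assms k(1) unfolding represents_def maps_prefix_def by blast
  then show "\<exists>m'. maps_prefix v m m'"
    using r maps_prefix_append by blast
qed

lemma cyl_partition_n_lists: "cyl_partition (List.n_lists n [False, True])"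
  unfolding cyl_partition_def
proof
  fix x
  let ?ms = "List.n_lists n [False, True]"
  have distinct: "distinct ?ms"
    by (simp add: distinct_n_lists)
  have set_ms: "set ?ms = {m. length m = n}"
    by (auto simp: set_n_lists)
  then have "map x [0..<n] \<in> set ?ms"
    by simp
  then obtain k where k: "k < length ?ms" "?ms ! k = map x [0..<n]"
    by (auto simp: in_set_conv_nth)
  have "j = k" if "j < length ?ms" "x \<in> cyl (?ms ! j)" for j
  proof -
    have "length (?ms ! j) = n"
      using set_ms nth_mem that(1) by blast
    then have "?ms ! j = ?ms ! k"
      using in_cyl_same_length[OF that(2) in_cyl_map_upt] k(2) by simp
    then show "j = k"
      using that(1) k(1) distinct nth_eq_iff_index_eq by blast
  qed
  moreover have "x \<in> cyl (?ms ! k)"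
    using k(2) in_cyl_map_upt by simp
  ultimately show "\<exists>!k. k < length ?ms \<and> x \<in> cyl (?ms ! k)"
    using k(1) by blast
qed

lemma cyl_partition_image:
  assumes v: "bij v" and ms: "cyl_partition ms" and len: "length ms' = length ms"
    and maps: "\<And>k. k < length ms \<Longrightarrow> maps_prefix v (ms ! k) (ms' ! k)"
  shows "cyl_partition ms'"
  unfolding cyl_partition_def
proof
  fix x
  have iff: "x \<in> cyl (ms' ! k) \<longleftrightarrow> finv v x \<in> cyl (ms ! k)" if "k < length ms" for k
    using maps_prefix_cyl[OF maps[OF that]] maps_prefix_cyl[OF maps_prefix_finv[OF v maps[OF that]]]
      v by (metis bij_is_surj surj_f_inv_f)
  show "\<exists>!k. k < length ms' \<and> x \<in> cyl (ms' ! k)"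
    using ms unfolding cyl_partition_def len by (simp add: iff cong: conj_cong)
qed

lemma acts_at_depth_imp_represents:
  assumes v: "bij v" and n: "acts_at_depth n v"
  shows "\<exists>ms ms'. represents v ms ms'"
proof -
  define ms where "ms = List.n_lists n [False, True]"
  define ms' where "ms' = map (\<lambda>m. SOME m'. maps_prefix v m m') ms"
  have "length (ms ! k) = n" if "k < length ms" for k
    using nth_mem[OF that] by (simp add: ms_def set_n_lists)
  then have "maps_prefix v (ms ! k) (ms' ! k)" if "k < length ms" for k
    using n that unfolding acts_at_depth_def ms'_def by (auto intro: someI_ex)
  moreover have "cyl_partition ms" "length ms' = length ms"
    by (simp_all add: ms_def ms'_def cyl_partition_n_lists)
  ultimately have "represents v ms ms'"
    using cyl_partition_image[OF v] unfolding represents_def maps_prefix_def by metis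
  then show ?thesis
    by blast
qed

lemma thompsonV_iff: "v \<in> thompsonV \<longleftrightarrow> bij v \<and> (\<exists>n. acts_at_depth n v)"
  unfolding thompsonV_def
  using represents_imp_acts_at_depth acts_at_depth_imp_represents by blast

lemma thompsonV_bij: "v \<in> thompsonV \<Longrightarrow> bij v"
  by (simp add: thompsonV_iff)

lemma acts_at_depth_comp:
  assumes v: "acts_at_depth n v" and w: "acts_at_depth p w"
  shows "acts_at_depth (p + n) (v \<circ> w)"
  unfolding acts_at_depth_def
proof (intro allI impI)
  fix m :: "bool list"
  assume m: "length m = p + n"
  have "length (take p m) = p"
    using m by simp
  then obtain m1 where m1: "maps_prefix w (take p m) m1"
    using w unfolding acts_at_depth_def by blast
  define q where "q = m1 @ drop p m"
  have "length (take n q) = n"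
    using m by (simp add: q_def)
  then obtain q' where q': "maps_prefix v (take n q) q'"
    using v unfolding acts_at_depth_def by blast
  have "maps_prefix w m q"
    using maps_prefix_append[OF m1, of "drop p m"] by (simp add: q_def)
  moreover have "maps_prefix v q (q' @ drop n q)"
    using maps_prefix_append[OF q', of "drop n q"] by simp
  ultimately show "\<exists>m'. maps_prefix (v \<circ> w) m m'"
    using maps_prefix_comp by blast
qed

lemma acts_at_depth_finv:
  assumes b: "bij v" and n: "acts_at_depth n v"
  shows "\<exists>N. acts_at_depth N (finv v)"
proof -
  define \<rho> where "\<rho> m = (SOME m'. maps_prefix v m m')" for m
  have \<rho>: "maps_prefix v m (\<rho> m)" if "length m = n" for m
    using n that unfolding acts_at_depth_def \<rho>_def by (auto intro: someI_ex)
  define N where "N = Max ((\<lambda>m. length (\<rho> m)) ` {m. length m = n})"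
  have le_N: "length (\<rho> m) \<le> N" if "length m = n" for m
    unfolding N_def using that by (auto intro!: Max_ge simp: finite_list_length)
  have "acts_at_depth N (finv v)"
    unfolding acts_at_depth_def
  proof (intro allI impI)
    fix u :: "bool list"
    assume u: "length u = N"
    define z where "z = finv v (pre u zeros)"
    define m where "m = map z [0..<n]"
    have m: "length m = n" "z \<in> cyl m"
      by (simp_all add: m_def in_cyl_map_upt)
    have "pre u zeros \<in> cyl (\<rho> m)"
      using maps_prefix_cyl[OF \<rho>[OF m(1)] m(2)] b by (simp add: z_def bij_is_surj surj_f_inv_f)
    then obtain r where "u = \<rho> m @ r"
      using in_cyl_pre_iff le_N[OF m(1)] u by (auto simp: prefix_def)
    then have "maps_prefix (finv v) u (m @ r)"
      using maps_prefix_finv[OF b maps_prefix_append[OF \<rho>[OF m(1)]]] by simp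
    then show "\<exists>m'. maps_prefix (finv v) u m'" ..
  qed
  then show ?thesis ..
qed

lemma thompsonV_comp: "v \<in> thompsonV \<Longrightarrow> w \<in> thompsonV \<Longrightarrow> v \<circ> w \<in> thompsonV"
  unfolding thompsonV_iff using acts_at_depth_comp bij_comp by blast

lemma thompsonV_finv: "v \<in> thompsonV \<Longrightarrow> finv v \<in> thompsonV"
  unfolding thompsonV_iff using acts_at_depth_finv bij_imp_bij_inv by blast

lemma thompsonV_id: "id \<in> thompsonV"
  unfolding thompsonV_iff acts_at_depth_def using maps_prefix_id by blast

lemma thompsonV_finv_f [simp]: "v \<in> thompsonV \<Longrightarrow> finv v (v x) = x"
  by (simp add: bij_is_inj thompsonV_bij)

lemma thompsonV_f_finv [simp]: "v \<in> thompsonV \<Longrightarrow> v (finv v x) = x"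
  by (simp add: bij_is_surj surj_f_inv_f thompsonV_bij)

lemma thompsonV_finv_comp:
  assumes "v \<in> thompsonV" "w \<in> thompsonV"
  shows "finv (v \<circ> w) x = finv w (finv v x)"
proof -
  have "(v \<circ> w) (finv w (finv v x)) = x"
    using assms by simp
  then show ?thesis
    using thompsonV_finv_f[OF thompsonV_comp[OF assms]] by metis
qed

lemma exists_maps_prefix_at:
  assumes "v \<in> thompsonV"
  shows "\<exists>m m'. x \<in> cyl m \<and> maps_prefix v m m'"
proof -
  obtain n where "acts_at_depth n v"
    using assms thompsonV_iff by blast
  then obtain m' where "maps_prefix v (map x [0..<n]) m'"
    unfolding acts_at_depth_def by fastforce
  then show ?thesis
    using in_cyl_map_upt by blast
qed

lemma maps_prefix_length_diff_le:
  assumes "x \<in> cyl m1" "maps_prefix v m1 m1'" "x \<in> cyl m2" "maps_prefix v m2 m2'"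
    and "length m1 \<le> length m2"
  shows "int (length m1) - int (length m1') = int (length m2) - int (length m2')"
proof -
  obtain r where r: "m2 = m1 @ r"
    using in_cyl_prefix[OF assms(1,3,5)] by (auto simp: prefix_def)
  then have "m2' = m1' @ r"
    using assms(2,4) maps_prefix_append maps_prefix_unique by blast
  then show ?thesis using r by simp
qed

lemma log2_slope_eq:
  assumes V: "v \<in> thompsonV" and m: "x \<in> cyl m" "maps_prefix v m m'"
  shows "log2_slope v x = int (length m) - int (length m')"
  unfolding log2_slope_def
proof (rule someI2_ex)
  obtain ms ms' where r: "represents v ms ms'"
    using V unfolding thompsonV_def by blast
  then obtain k where "k < length ms" "x \<in> cyl (ms ! k)"
    unfolding represents_def cyl_partition_def by blast
  then show "\<exists>d. \<exists>ms ms'. represents v ms ms' \<and> (\<exists>k<length ms. x \<in> cyl (ms ! k) \<and>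
      d = int (length (ms ! k)) - int (length (ms' ! k)))"
    using r by blast
next
  fix d
  assume "\<exists>ms ms'. represents v ms ms' \<and> (\<exists>k<length ms. x \<in> cyl (ms ! k) \<and>
      d = int (length (ms ! k)) - int (length (ms' ! k)))"
  then obtain ms ms' k where r: "represents v ms ms'" and k: "k < length ms" "x \<in> cyl (ms ! k)"
    and d: "d = int (length (ms ! k)) - int (length (ms' ! k))"
    by blast
  have "maps_prefix v (ms ! k) (ms' ! k)"
    using r k(1) unfolding represents_def maps_prefix_def by blast
  then show "d = int (length m) - int (length m')"
    using d k(2) m maps_prefix_length_diff_le[of x "ms ! k" v "ms' ! k" m m']
      maps_prefix_length_diff_le[of x m v m' "ms ! k" "ms' ! k"] by linarith
qed

lemma log2_slope_comp:
  assumes v: "v \<in> thompsonV" and w: "w \<in> thompsonV"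
  shows "log2_slope (v \<circ> w) x = log2_slope v (w x) + log2_slope w x"
proof -
  obtain a a' where a: "x \<in> cyl a" "maps_prefix w a a'"
    using exists_maps_prefix_at[OF w] by blast
  obtain b b' where b: "w x \<in> cyl b" "maps_prefix v b b'"
    using exists_maps_prefix_at[OF v] by blast
  have wx: "w x \<in> cyl a'"
    using a maps_prefix_cyl by blast
  have vw: "v \<circ> w \<in> thompsonV"
    using v w thompsonV_comp by blast
  show ?thesis
  proof (cases "length a' \<le> length b")
    case True
    then obtain r where r: "b = a' @ r"
      using in_cyl_prefix[OF wx b(1)] by (auto simp: prefix_def)
    define y where "y = shift (length a) x"
    have x: "x = pre a y"
      using pre_shift[OF a(1)] by (simp add: y_def)
    then have "w x = pre a' y"
      using a(2) unfolding maps_prefix_def by simp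
    then have "y \<in> cyl r"
      using b(1) r pre_in_cyl_append_iff by simp
    then have "x \<in> cyl (a @ r)"
      using x pre_in_cyl_append_iff by simp
    moreover have "maps_prefix (v \<circ> w) (a @ r) b'"
      using maps_prefix_comp[OF maps_prefix_append[OF a(2), of r]] b(2) r by simp
    ultimately show ?thesis
      using log2_slope_eq[OF vw] log2_slope_eq[OF v b] log2_slope_eq[OF w a] r by simp
  next
    case False
    then obtain r where r: "a' = b @ r"
      using in_cyl_prefix[OF b(1) wx] by (auto simp: prefix_def)
    have "maps_prefix (v \<circ> w) a (b' @ r)"
      using maps_prefix_comp[OF a(2)] maps_prefix_append[OF b(2), of r] r by simp
    then show ?thesis
      using log2_slope_eq[OF vw a(1)] log2_slope_eq[OF v b] log2_slope_eq[OF w a] r by simp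
  qed
qed

lemma log2_slope_id: "log2_slope id x = 0"
  using log2_slope_eq[OF thompsonV_id, of x "[]" "[]"] maps_prefix_id by (simp add: cyl_def)

lemma thompsonV_Q2:
  assumes "v \<in> thompsonV" "x \<in> Q2"
  shows "v x \<in> Q2"
proof -
  obtain m m' where m: "x \<in> cyl m" "maps_prefix v m m'"
    using exists_maps_prefix_at[OF assms(1)] by blast
  have "v x = pre m' (shift (length m) x)"
    using m(2) pre_shift[OF m(1)] unfolding maps_prefix_def by metis
  moreover have "shift (length m) x \<in> Q2"
    using assms(2) pre_shift[OF m(1)] pre_in_Q2_iff by metis
  ultimately show ?thesis
    using pre_in_Q2_iff by simp
qed

lemma thompsonV_finv_Q2: "v \<in> thompsonV \<Longrightarrow> x \<in> Q2 \<Longrightarrow> finv v x \<in> Q2"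
  using thompsonV_Q2 thompsonV_finv by blast

section \<open>Swaps, the element tau and transitivity on Q2\<close>

definition swap :: "bool list \<Rightarrow> bool list \<Rightarrow> cantor \<Rightarrow> cantor" where
  "swap a b x = (if x \<in> cyl a then pre b (shift (length a) x)
     else if x \<in> cyl b then pre a (shift (length b) x) else x)"

lemma maps_prefix_swap_left: "maps_prefix (swap a b) a b"
  by (simp add: maps_prefix_def swap_def)

lemma maps_prefix_swap_right: "a \<parallel> b \<Longrightarrow> maps_prefix (swap a b) b a"
  by (simp add: maps_prefix_def swap_def pre_notin_parallel_cyl)

lemma swap_outside: "x \<notin> cyl a \<Longrightarrow> x \<notin> cyl b \<Longrightarrow> swap a b x = x"
  by (simp add: swap_def)

lemma maps_prefix_swap_parallel: "w \<parallel> a \<Longrightarrow> w \<parallel> b \<Longrightarrow> maps_prefix (swap a b) w w"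
  unfolding maps_prefix_def
  by (metis parallel_commute pre_notin_parallel_cyl swap_outside)

lemma swap_self: "swap a a = id"
  by (simp add: fun_eq_iff swap_def pre_shift)

lemma swap_comp_self:
  assumes "a \<parallel> b"
  shows "swap a b \<circ> swap a b = id"
proof
  fix x
  consider "x \<in> cyl a" | "x \<in> cyl b" | "x \<notin> cyl a" "x \<notin> cyl b"
    by blast
  then show "(swap a b \<circ> swap a b) x = id x"
  proof cases
    case 1
    then show ?thesis
      using maps_prefix_swap_left maps_prefix_swap_right[OF assms] pre_shift
      unfolding maps_prefix_def by (metis comp_apply id_apply)
  next
    case 2
    then show ?thesis
      using maps_prefix_swap_left maps_prefix_swap_right[OF assms] pre_shift
      unfolding maps_prefix_def by (metis comp_apply id_apply)
  qed (simp add: swap_outside)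
qed

lemma swap_in_thompsonV:
  assumes ab: "a \<parallel> b"
  shows "swap a b \<in> thompsonV"
proof -
  have "bij (swap a b)"
    using swap_comp_self[OF ab] by (rule o_bij) (rule swap_comp_self[OF ab])
  moreover have "acts_at_depth (max (length a) (length b)) (swap a b)"
    unfolding acts_at_depth_def
  proof (intro allI impI)
    fix m :: "bool list"
    assume m: "length m = max (length a) (length b)"
    consider "prefix a m" | "prefix b m" | "\<forall>y. pre m y \<notin> cyl a \<and> pre m y \<notin> cyl b"
      using m in_cyl_pre_iff by (metis max.cobounded1 max.cobounded2)
    then show "\<exists>m'. maps_prefix (swap a b) m m'"
    proof cases
      case 1
      then show ?thesis
        using maps_prefix_append[OF maps_prefix_swap_left] by (auto simp: prefix_def)
    next
      case 2
      then show ?thesis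
        using maps_prefix_append[OF maps_prefix_swap_right[OF ab]] by (auto simp: prefix_def)
    next
      case 3
      then have "maps_prefix (swap a b) m m"
        by (simp add: maps_prefix_def swap_outside)
      then show ?thesis ..
    qed
  qed
  ultimately show ?thesis
    using thompsonV_iff by blast
qed

lemma swap_fixes_zeros:
  assumes "a \<parallel> b" "zeros \<notin> cyl a" "zeros \<notin> cyl b"
  shows "swap a b zeros = zeros" "log2_slope (swap a b) zeros = 0"
proof -
  show "swap a b zeros = zeros"
    using assms by (simp add: swap_outside)
  define k where "k = max (length a) (length b)"
  have "pre (replicate k False) y \<notin> cyl c" if "c = a \<or> c = b" for c y
  proof
    assume "pre (replicate k False) y \<in> cyl c"
    then have "prefix c (replicate k False)"
      using that in_cyl_pre_iff by (auto simp: k_def)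
    then have "zeros \<in> cyl c"
      using prefix_pre_in_cyl pre_replicate_zeros by metis
    then show False
      using that assms by blast
  qed
  then have "maps_prefix (swap a b) (replicate k False) (replicate k False)"
    by (simp add: maps_prefix_def swap_outside)
  moreover have "zeros \<in> cyl (replicate k False)"
    by (metis pre_in_cyl pre_replicate_zeros)
  ultimately show "log2_slope (swap a b) zeros = 0"
    using log2_slope_eq[OF swap_in_thompsonV[OF assms(1)]] by simp
qed

text \<open>A swap of two disjoint cylinders is the square of a product of two involutions:
  \<open>s\<^sub>1\<close> swaps the left halves of the cylinders, \<open>t\<close> swaps the two halves inside each.\<close>
lemma swap_eq_commutator:
  assumes ab: "a \<parallel> b"
  defines "s\<^sub>1 \<equiv> swap (a @ [False]) (b @ [False])"
    and "t \<equiv> swap (a @ [False]) (a @ [True]) \<circ> swap (b @ [False]) (b @ [True])"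
  shows "swap a b = s\<^sub>1 \<circ> t \<circ> s\<^sub>1 \<circ> t"
proof
  fix x
  have par: "a @ [e] \<parallel> b @ [e']" "b @ [e] \<parallel> a @ [e']" for e e'
    using parallel_append ab parallel_commute[of a b] by auto
  have sib: "u @ [False] \<parallel> u @ [True]" "u @ [True] \<parallel> u @ [False]" for u :: "bool list"
    by (auto simp: parallel_def prefix_def)
  have left: "swap p q (pre p y) = pre q y" for p q y
    using maps_prefix_swap_left unfolding maps_prefix_def by blast
  have right: "p \<parallel> q \<Longrightarrow> swap p q (pre q y) = pre p y" for p q y
    using maps_prefix_swap_right unfolding maps_prefix_def by blast
  have out: "w \<parallel> p \<Longrightarrow> w \<parallel> q \<Longrightarrow> swap p q (pre w y) = pre w y" for p q w y
    using maps_prefix_swap_parallel unfolding maps_prefix_def by blast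
  consider "x \<in> cyl a" | "x \<in> cyl b" | "x \<notin> cyl a" "x \<notin> cyl b"
    by blast
  then show "swap a b x = (s\<^sub>1 \<circ> t \<circ> s\<^sub>1 \<circ> t) x"
  proof cases
    case 1
    then obtain e y where x: "x = pre (a @ [e]) y"
      using in_cyl_split by blast
    then have "swap a b x = pre (b @ [e]) y"
      by (simp add: pre_append left)
    then show ?thesis
      unfolding x s\<^sub>1_def t_def by (cases e) (simp_all add: left right out par sib)
  next
    case 2
    then obtain e y where x: "x = pre (b @ [e]) y"
      using in_cyl_split by blast
    then have "swap a b x = pre (a @ [e]) y"
      by (simp add: pre_append right[OF ab])
    then show ?thesis
      unfolding x s\<^sub>1_def t_def by (cases e) (simp_all add: left right out par sib)
  next
    case 3
    then have "x \<notin> cyl (a @ [e])" "x \<notin> cyl (b @ [e])" for e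
      using cyl_append_subset by blast+
    then show ?thesis
      using 3 by (simp add: s\<^sub>1_def t_def swap_outside)
  qed
qed

definition tau :: "cantor \<Rightarrow> cantor" where
  "tau x = (if x \<in> cyl [False, False] then pre [False] (shift 2 x)
     else if x \<in> cyl [False, True] then pre [True, False] (shift 2 x)
     else pre [True, True] (shift 1 x))"

lemma maps_prefix_tau:
  "maps_prefix tau [False, False] [False]"
  "maps_prefix tau [False, True] [True, False]"
  "maps_prefix tau [True] [True, True]"
  by (simp_all add: maps_prefix_def tau_def pre_Cons_in_cyl_Cons_iff shift_pre_length)

lemma exists_pre_two: "\<exists>e e' y. x = pre [e, e'] y"
proof -
  obtain e y where "x = pre [e] y"
    using in_cyl_split[of x "[]"] by (auto simp: in_cyl_iff)
  moreover obtain e' z where "y = pre [e'] z"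
    using in_cyl_split[of y "[]"] by (auto simp: in_cyl_iff)
  ultimately have "x = pre [e, e'] z"
    by (simp add: pre_Cons[of e "[e']"])
  then show ?thesis
    by blast
qed

lemma bij_tau: "bij tau"
proof -
  define tau' where "tau' x = (if x \<in> cyl [False] then pre [False, False] (shift 1 x)
     else if x \<in> cyl [True, False] then pre [False, True] (shift 2 x)
     else pre [True] (shift 2 x))" for x
  have tau': "tau' (pre [False] y) = pre [False, False] y" "tau' (pre [True, False] y) = pre [False, True] y"
    "tau' (pre [True, True] y) = pre [True] y" for y
    by (simp_all add: tau'_def pre_Cons_in_cyl_Cons_iff shift_pre_length)
  have tau: "tau (pre [False, False] y) = pre [False] y" "tau (pre [False, True] y) = pre [True, False] y"
    "tau (pre [True] y) = pre [True, True] y" for y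
    using maps_prefix_tau unfolding maps_prefix_def by blast+
  have "tau' (tau x) = x" "tau (tau' x) = x" for x
  proof -
    obtain e e' y where x: "x = pre [e, e'] y"
      using exists_pre_two by blast
    have x': "x = pre [e] (pre [e'] y)"
      using x pre_Cons[of e "[e']"] by simp
    show "tau' (tau x) = x"
    proof (cases e)
      case True
      then show ?thesis
        unfolding x' by (simp add: tau(3) tau'(3))
    next
      case False
      then show ?thesis
        unfolding x by (cases e') (simp_all add: tau tau')
    qed
    show "tau (tau' x) = x"
    proof (cases e)
      case True
      then show ?thesis
        unfolding x by (cases e') (simp_all add: tau tau')
    next
      case False
      then show ?thesis
        unfolding x' by (simp add: tau(1) tau'(1))
    qed
  qed
  then show "bij tau"
    by (intro o_bij[of tau']) (simp_all add: fun_eq_iff)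
qed

lemma tau_in_thompsonV: "tau \<in> thompsonV"
proof -
  have "acts_at_depth 2 tau"
    unfolding acts_at_depth_def
  proof (intro allI impI)
    fix m :: "bool list"
    assume "length m = 2"
    then obtain e e' where m: "m = [e, e']"
      by (auto simp: numeral_2_eq_2 length_Suc_conv)
    show "\<exists>m'. maps_prefix tau m m'"
      using maps_prefix_tau maps_prefix_append[OF maps_prefix_tau(3), of "[e']"] unfolding m
      by (cases e; cases e') auto
  qed
  then show ?thesis
    using thompsonV_iff bij_tau by blast
qed

lemma zeros_in_cyl_False_False: "zeros \<in> cyl [False, False]"
  unfolding in_cyl_iff zeros_def by (simp add: less_Suc_eq)

lemma tau_zeros: "tau zeros = zeros"
proof -
  have "pre [False, False] zeros = zeros" "pre [False] zeros = zeros"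
    using pre_replicate_zeros[of 2] pre_replicate_zeros[of 1] by (simp_all add: numeral_2_eq_2)
  then show ?thesis
    using maps_prefix_tau(1) unfolding maps_prefix_def by metis
qed

lemma log2_slope_tau_zeros: "log2_slope tau zeros = 1"
  using log2_slope_eq[OF tau_in_thompsonV zeros_in_cyl_False_False maps_prefix_tau(1)] by simp

lemma thompsonV_transitive_Q2:
  assumes "x \<in> Q2"
  shows "\<exists>g\<in>thompsonV. g zeros = x"
proof (cases "x = zeros")
  case True
  then show ?thesis
    using thompsonV_id by (intro bexI[of _ id]) auto
next
  case False
  obtain N where N: "\<forall>n\<ge>N. \<not> x n"
    using assms by (auto simp: Q2_def)
  define m where "m = map x [0..<N]"
  define r where "r = replicate (Suc N) False"
  have x: "x = pre m zeros"
    using N by (auto simp: fun_eq_iff m_def pre_def zeros_def not_less)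
  have "True \<in> set m"
  proof (rule ccontr)
    assume "True \<notin> set m"
    then have "replicate (length m) False = m"
      by (intro replicate_length_same) auto
    then show False
      using False x pre_replicate_zeros by metis
  qed
  then have "\<not> prefix m r"
    using set_mono_prefix by (fastforce simp: r_def)
  moreover have "\<not> prefix r m"
    using prefix_length_le by (fastforce simp: r_def m_def)
  ultimately have par: "r \<parallel> m"
    by (simp add: parallel_def)
  have "swap r m zeros = swap r m (pre r zeros)"
    by (simp only: r_def pre_replicate_zeros)
  also have "\<dots> = x"
    using maps_prefix_swap_left[of r m] x unfolding maps_prefix_def by simp
  finally show ?thesis
    using swap_in_thompsonV[OF par] by blast
qed

section \<open>Complete prefix codes\<close>

definition complete_code :: "bool list set \<Rightarrow> bool" where
  "complete_code A \<longleftrightarrow> finite A \<and> (\<forall>x. \<exists>!a. a \<in> A \<and> x \<in> cyl a)"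

definition maps_code :: "(cantor \<Rightarrow> cantor) \<Rightarrow> bool list set \<Rightarrow> bool list set \<Rightarrow> bool" where
  "maps_code g A B \<longleftrightarrow> (\<forall>a\<in>A. \<exists>b\<in>B. maps_prefix g a b) \<and> (\<forall>b\<in>B. \<exists>a\<in>A. maps_prefix g a b)"

definition expand :: "bool list \<Rightarrow> bool list set \<Rightarrow> bool list set" where
  "expand u A = insert (u @ [False]) (insert (u @ [True]) (A - {u}))"

lemma complete_code_unique:
  "complete_code A \<Longrightarrow> a \<in> A \<Longrightarrow> b \<in> A \<Longrightarrow> x \<in> cyl a \<Longrightarrow> x \<in> cyl b \<Longrightarrow> a = b"
  unfolding complete_code_def by blast

lemma complete_code_parallel:
  assumes A: "complete_code A" and ab: "a \<in> A" "b \<in> A" "a \<noteq> b"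
  shows "a \<parallel> b"
proof -
  have "\<not> prefix p q" if "p \<in> A" "q \<in> A" "p \<noteq> q" for p q
    using complete_code_unique[OF A that(1,2) prefix_pre_in_cyl pre_in_cyl] that(3) by blast
  then show ?thesis
    using ab by (simp add: parallel_def)
qed

lemma complete_code_Nil:
  assumes A: "complete_code A" and Nil: "[] \<in> A"
  shows "A = {[]}"
proof -
  have "a = []" if "a \<in> A" for a
    using complete_code_unique[OF A that Nil, of "pre a zeros"] by (simp add: in_cyl_iff[of _ "[]"])
  then show ?thesis
    using Nil by blast
qed

lemma complete_code_card_1:
  assumes A: "complete_code A" and card: "card A = 1"
  shows "A = {[]}"
proof -
  obtain a where a: "A = {a}"
    using card card_1_singletonE by blast
  have "a = []"
  proof (rule ccontr)
    assume "a \<noteq> []"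
    then obtain e r where "a = e # r"
      by (cases a) auto
    moreover obtain b where "b \<in> A" "pre [\<not> e] zeros \<in> cyl b"
      using A unfolding complete_code_def by blast
    ultimately show False
      using a by (simp add: pre_Cons_in_cyl_Cons_iff)
  qed
  then show ?thesis
    using a by simp
qed

lemma complete_code_expand:
  assumes A: "complete_code A" and u: "u \<in> A"
  shows "complete_code (expand u A)"
  unfolding complete_code_def
proof (intro conjI allI)
  show "finite (expand u A)"
    using A by (simp add: complete_code_def expand_def)
  fix x
  obtain a where a: "a \<in> A" "x \<in> cyl a"
    using A unfolding complete_code_def by blast
  have ex: "\<exists>b. b \<in> expand u A \<and> x \<in> cyl b"
  proof (cases "a = u")
    case True
    then obtain e y where "x = pre (u @ [e]) y"
      using a(2) in_cyl_split by blast
    then have "x \<in> cyl (u @ [e])"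
      by simp
    moreover have "u @ [e] \<in> expand u A"
      by (cases e) (simp_all add: expand_def)
    ultimately show ?thesis
      by blast
  next
    case False
    then show ?thesis
      using a by (auto simp: expand_def)
  qed
  have canon: "b = (if x \<in> cyl u then u @ [x (length u)] else a)"
    if b: "b \<in> expand u A" "x \<in> cyl b" for b
  proof (cases "b \<in> A - {u}")
    case True
    then have "b = a"
      using complete_code_unique[OF A _ a(1) b(2) a(2)] by blast
    moreover have "x \<notin> cyl u"
      using complete_code_unique[OF A _ u b(2)] True by blast
    ultimately show ?thesis
      by simp
  next
    case False
    then obtain e where e: "b = u @ [e]"
      using b(1) by (auto simp: expand_def)
    then have "x \<in> cyl u"
      using b(2) cyl_append_subset by blast
    moreover have "x (length u) = e"
      using b(2) unfolding e in_cyl_iff by simp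
    ultimately show ?thesis
      using e by simp
  qed
  show "\<exists>!b. b \<in> expand u A \<and> x \<in> cyl b"
    using ex canon by blast
qed

lemma complete_code_sibling:
  assumes A: "complete_code A" and two: "2 \<le> card A"
  shows "\<exists>u. u @ [False] \<in> A \<and> u @ [True] \<in> A"
proof -
  have fin: "finite A" and ne: "A \<noteq> {}"
    using A two unfolding complete_code_def by auto
  have "Max (length ` A) \<in> length ` A"
    using fin ne by simp
  then obtain w where w: "w \<in> A" "length w = Max (length ` A)"
    by auto
  then have w: "w \<in> A" "\<forall>a\<in>A. length a \<le> length w"
    using fin by simp_all
  have "w \<noteq> []"
    using complete_code_Nil[OF A] w(1) two by force
  then obtain u e where we: "w = u @ [e]"
    by (metis rev_exhaust)
  define s where "s = u @ [\<not> e]"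
  obtain a where a: "a \<in> A" "pre s zeros \<in> cyl a"
    using A unfolding complete_code_def by blast
  have "prefix a s"
    using a w(2) in_cyl_pre_iff by (simp add: s_def we)
  have "a = s"
  proof (rule ccontr)
    assume "a \<noteq> s"
    then have "prefix a u"
      using \<open>prefix a s\<close> by (simp add: s_def prefix_snoc)
    then have "pre w zeros \<in> cyl a"
      using prefix_pre_in_cyl we prefix_prefix by blast
    then have "a = w"
      using complete_code_unique[OF A a(1) w(1)] by simp
    then show False
      using \<open>prefix a u\<close> we prefix_length_le by fastforce
  qed
  then have "s \<in> A"
    using a(1) by simp
  then show ?thesis
    using w(1) we by (cases e) (auto simp: s_def)
qed

lemma complete_code_merge:
  assumes A: "complete_code A" and both: "u @ [False] \<in> A" "u @ [True] \<in> A"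
  defines "A' \<equiv> insert u (A - {u @ [False], u @ [True]})"
  shows "complete_code A'"
  unfolding complete_code_def
proof (intro conjI allI)
  show "finite A'"
    using A by (simp add: A'_def complete_code_def)
  fix x
  obtain a where a: "a \<in> A" "x \<in> cyl a"
    using A unfolding complete_code_def by blast
  have ex: "\<exists>b. b \<in> A' \<and> x \<in> cyl b"
    using a cyl_append_subset by (cases "a \<in> {u @ [False], u @ [True]}") (auto simp: A'_def)
  have canon: "b = (if x \<in> cyl u then u else a)" if b: "b \<in> A'" "x \<in> cyl b" for b
  proof (cases "b = u")
    case False
    then have b': "b \<in> A" "b \<noteq> u @ [False]" "b \<noteq> u @ [True]"
      using b(1) by (auto simp: A'_def)
    have "x \<notin> cyl u"
    proof
      assume "x \<in> cyl u"
      then obtain e y where "x = pre (u @ [e]) y"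
        using in_cyl_split by blast
      then have "b = u @ [e]"
        using complete_code_unique[OF A b'(1) _ b(2)] both by (cases e) auto
      then show False
        using b' by (cases e) auto
    qed
    then show ?thesis
      using complete_code_unique[OF A b'(1) a(1) b(2) a(2)] by simp
  qed (use b in simp)
  show "\<exists>!b. b \<in> A' \<and> x \<in> cyl b"
    using ex canon by blast
qed

lemma complete_code_eq_expand:
  assumes A: "complete_code A" and two: "2 \<le> card A"
  shows "\<exists>u A'. complete_code A' \<and> u \<in> A' \<and> A = expand u A' \<and> card A' = card A - 1"
proof -
  obtain u where both: "u @ [False] \<in> A" "u @ [True] \<in> A"
    using complete_code_sibling[OF A two] by blast
  have uA: "u \<notin> A"
  proof
    assume "u \<in> A"
    moreover have "pre (u @ [False]) zeros \<in> cyl u"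
      by (simp add: prefix_pre_in_cyl)
    ultimately have "u = u @ [False]"
      using complete_code_unique[OF A _ both(1)] pre_in_cyl by blast
    then show False
      by simp
  qed
  define A' where "A' = insert u (A - {u @ [False], u @ [True]})"
  have fin: "finite A"
    using A by (simp add: complete_code_def)
  have "A = expand u A'"
    using both uA by (auto simp: expand_def A'_def)
  moreover have "card A' = card A - 1"
  proof -
    have "card (A - {u @ [False], u @ [True]}) = card A - 2"
      using both fin by (simp add: card_Diff_subset)
    then show ?thesis
      using uA fin two by (simp add: A'_def)
  qed
  ultimately show ?thesis
    using complete_code_merge[OF A both] unfolding A'_def by blast
qed

lemma maps_code_id: "maps_code id A A"
  unfolding maps_code_def using maps_prefix_id by blast

lemma maps_code_comp: "maps_code g A B \<Longrightarrow> maps_code h B C \<Longrightarrow> maps_code (h \<circ> g) A C"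
  unfolding maps_code_def by (meson maps_prefix_comp)

lemma maps_code_finv: "bij g \<Longrightarrow> maps_code g A B \<Longrightarrow> maps_code (finv g) B A"
  unfolding maps_code_def by (meson maps_prefix_finv)

lemma maps_code_eq_image:
  assumes "maps_code g A B"
  obtains \<pi> where "B = \<pi> ` A" "\<And>a. a \<in> A \<Longrightarrow> maps_prefix g a (\<pi> a)"
proof
  define \<pi> where "\<pi> a = (SOME b. b \<in> B \<and> maps_prefix g a b)" for a
  have \<pi>: "\<pi> a \<in> B \<and> maps_prefix g a (\<pi> a)" if "a \<in> A" for a
  proof -
    have "\<exists>b. b \<in> B \<and> maps_prefix g a b"
      using assms that unfolding maps_code_def by blast
    then show ?thesis
      unfolding \<pi>_def by (rule someI_ex)
  qed
  then show "maps_prefix g a (\<pi> a)" if "a \<in> A" for a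
    using that by blast
  show "B = \<pi> ` A"
  proof
    show "\<pi> ` A \<subseteq> B"
      using \<pi> by blast
    show "B \<subseteq> \<pi> ` A"
    proof
      fix b
      assume "b \<in> B"
      then obtain a where a: "a \<in> A" "maps_prefix g a b"
        using assms unfolding maps_code_def by blast
      then have "b = \<pi> a"
        using \<pi> maps_prefix_unique by blast
      then show "b \<in> \<pi> ` A"
        using a(1) by blast
    qed
  qed
qed

lemma maps_code_card:
  assumes g: "inj g" and A: "finite A" and gAB: "maps_code g A B"
  shows "card B = card A"
proof -
  obtain \<pi> where B: "B = \<pi> ` A" and \<pi>: "\<And>a. a \<in> A \<Longrightarrow> maps_prefix g a (\<pi> a)"
    using maps_code_eq_image[OF gAB] by blast
  have "inj_on \<pi> A"
  proof (rule inj_onI)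
    fix a a'
    assume "a \<in> A" "a' \<in> A" "\<pi> a = \<pi> a'"
    then show "a = a'"
      using maps_prefix_inj[OF g] \<pi> by metis
  qed
  then show ?thesis
    using B by (simp add: card_image)
qed

lemma complete_code_image:
  assumes g: "g \<in> thompsonV" and A: "complete_code A" and gAB: "maps_code g A B"
  shows "complete_code B"
  unfolding complete_code_def
proof (intro conjI allI)
  obtain \<pi> where "B = \<pi> ` A"
    using maps_code_eq_image[OF gAB] by blast
  then show "finite B"
    using A by (simp add: complete_code_def)
  fix x
  define z where "z = finv g x"
  obtain a where a: "a \<in> A" "z \<in> cyl a"
    using A unfolding complete_code_def by blast
  then obtain b where b: "b \<in> B" "maps_prefix g a b"
    using gAB unfolding maps_code_def by blast
  have "x \<in> cyl b"
    using maps_prefix_cyl[OF b(2) a(2)] g by (simp add: z_def)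
  moreover have "b1 = b2" if b: "b1 \<in> B" "x \<in> cyl b1" "b2 \<in> B" "x \<in> cyl b2" for b1 b2
  proof -
    obtain a1 where a1: "a1 \<in> A" "maps_prefix g a1 b1"
      using gAB b(1) unfolding maps_code_def by blast
    obtain a2 where a2: "a2 \<in> A" "maps_prefix g a2 b2"
      using gAB b(3) unfolding maps_code_def by blast
    have "z \<in> cyl a1" "z \<in> cyl a2"
      unfolding z_def
      using maps_prefix_cyl[OF maps_prefix_finv[OF thompsonV_bij[OF g]]] a1(2) a2(2) b(2,4)
      by blast+
    then have "a1 = a2"
      using complete_code_unique[OF A a1(1) a2(1)] by blast
    then show "b1 = b2"
      using a1(2) a2(2) maps_prefix_unique by blast
  qed
  ultimately show "\<exists>!b. b \<in> B \<and> x \<in> cyl b"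
    using b(1) by blast
qed

lemma maps_code_expand:
  assumes g: "inj g" and gAB: "maps_code g A B" and u: "u \<in> A" and uv: "maps_prefix g u v"
  shows "maps_code g (expand u A) (expand v B)"
  unfolding maps_code_def
proof (intro conjI ballI)
  have split: "maps_prefix g (u @ [e]) (v @ [e])" for e
    using maps_prefix_append[OF uv] .
  fix a
  assume "a \<in> expand u A"
  then consider e where "a = u @ [e]" | "a \<in> A" "a \<noteq> u"
    by (auto simp: expand_def)
  then show "\<exists>b\<in>expand v B. maps_prefix g a b"
  proof cases
    case (1 e)
    then show ?thesis
      using split by (cases e) (auto simp: expand_def)
  next
    case 2
    then obtain b where "b \<in> B" "maps_prefix g a b"
      using gAB unfolding maps_code_def by blast
    moreover have "b \<noteq> v"
      using 2 maps_prefix_inj[OF g] uv calculation(2) by blast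
    ultimately show ?thesis
      by (auto simp: expand_def)
  qed
next
  have split: "maps_prefix g (u @ [e]) (v @ [e])" for e
    using maps_prefix_append[OF uv] .
  fix b
  assume "b \<in> expand v B"
  then consider e where "b = v @ [e]" | "b \<in> B" "b \<noteq> v"
    by (auto simp: expand_def)
  then show "\<exists>a\<in>expand u A. maps_prefix g a b"
  proof cases
    case (1 e)
    then show ?thesis
      using split by (cases e) (auto simp: expand_def)
  next
    case 2
    then obtain a where "a \<in> A" "maps_prefix g a b"
      using gAB unfolding maps_code_def by blast
    moreover have "a \<noteq> u"
      using 2 maps_prefix_unique uv calculation(2) by blast
    ultimately show ?thesis
      by (auto simp: expand_def)
  qed
qed

lemma maps_prefix_swap_in_code:
  assumes C: "complete_code C" and abw: "a \<in> C" "b \<in> C" "w \<in> C"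
  shows "maps_prefix (swap a b) w (if w = a then b else if w = b then a else w)"
proof (cases "a = b")
  case True
  then show ?thesis
    using maps_prefix_id by (simp add: swap_self)
next
  case False
  then show ?thesis
    using complete_code_parallel[OF C] abw maps_prefix_swap_left maps_prefix_swap_right
      maps_prefix_swap_parallel by simp
qed

lemma maps_code_swap:
  assumes C: "complete_code C" and ab: "a \<in> C" "b \<in> C"
  shows "maps_code (swap a b) C C"
  unfolding maps_code_def
proof (intro conjI ballI)
  fix w
  assume w: "w \<in> C"
  show "\<exists>w'\<in>C. maps_prefix (swap a b) w w'"
    using maps_prefix_swap_in_code[OF C ab w] ab w by (auto split: if_splits)
  define w' where "w' = (if w = a then b else if w = b then a else w)"
  have "w' \<in> C" "maps_prefix (swap a b) w' w"
    using maps_prefix_swap_in_code[OF C ab, of w'] ab w by (auto simp: w'_def)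
  then show "\<exists>w'\<in>C. maps_prefix (swap a b) w' w"
    by blast
qed

lemma complete_code_words: "complete_code {m. length m = n}"
  unfolding complete_code_def
proof (intro conjI allI)
  show "finite {m :: bool list. length m = n}"
    by (rule finite_list_length)
  fix x
  show "\<exists>!m. m \<in> {m. length m = n} \<and> x \<in> cyl m"
    using in_cyl_map_upt in_cyl_same_length by (intro ex1I[of _ "map x [0..<n]"]) auto
qed

text \<open>\<open>comb n = {0, 10, 110, \<dots>, 1\<^sup>n\<^sup>-\<^sup>10, 1\<^sup>n}\<close>, the normal form of a code with \<open>n + 1\<close> words.\<close>
fun comb :: "nat \<Rightarrow> bool list set" where
  "comb 0 = {[]}"
| "comb (Suc n) = insert [False] (Cons True ` comb n)"

lemma False_in_comb: "[False] \<in> comb (Suc n)"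
  by simp

lemma replicate_True_in_comb: "replicate n True \<in> comb n"
  by (induction n) auto

lemma comb_Suc_expand: "comb (Suc n) = expand (replicate n True) (comb n)"
proof (induction n)
  case 0
  then show ?case
    by (auto simp: expand_def)
next
  case (Suc n)
  have "comb (Suc (Suc n)) = insert [False] (Cons True ` expand (replicate n True) (comb n))"
    using Suc by simp
  also have "\<dots> = expand (replicate (Suc n) True) (comb (Suc n))"
    by (auto simp: expand_def)
  finally show ?case .
qed

lemma complete_code_comb: "complete_code (comb n)"
proof (induction n)
  case 0
  have "complete_code {m :: bool list. length m = 0}"
    by (rule complete_code_words)
  then show ?case
    by simp
next
  case (Suc n)
  then show ?case
    using complete_code_expand replicate_True_in_comb comb_Suc_expand by metis
qed

lemma complete_code_card_2:
  assumes A: "complete_code A" and card: "card A = 2"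
  shows "A = comb (Suc 0)"
proof -
  obtain u A' where A': "complete_code A'" "u \<in> A'" "A = expand u A'" "card A' = card A - 1"
    using complete_code_eq_expand[OF A] card by auto
  then have "A' = {[]}"
    using complete_code_card_1 card by simp
  then show ?thesis
    using A' by (auto simp: expand_def)
qed

lemma tau_maps_expand_comb:
  "maps_code tau (expand [False] (comb (Suc n))) (comb (Suc (Suc n)))"
proof -
  have "expand [False] (comb (Suc n)) = {[False, False], [False, True]} \<union> Cons True ` comb n"
    by (auto simp: expand_def)
  moreover have "comb (Suc (Suc n)) = {[False], [True, False]} \<union> Cons True ` Cons True ` comb n"
    by auto
  moreover have "maps_prefix tau (True # w) (True # True # w)" for w
    using maps_prefix_append[OF maps_prefix_tau(3), of w] by simp
  ultimately show ?thesis
    unfolding maps_code_def using maps_prefix_tau(1,2) by auto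
qed

section \<open>Homomorphisms on the stabiliser of zeros\<close>

definition Stab :: "(cantor \<Rightarrow> cantor) set" where
  "Stab = {h \<in> thompsonV. h zeros = zeros}"

lemma Stab_comp: "g \<in> Stab \<Longrightarrow> h \<in> Stab \<Longrightarrow> g \<circ> h \<in> Stab"
  by (simp add: Stab_def thompsonV_comp)

lemma Stab_finv: "h \<in> Stab \<Longrightarrow> finv h \<in> Stab"
  by (metis (mono_tags, lifting) Stab_def mem_Collect_eq thompsonV_finv thompsonV_finv_f)

lemma Stab_finv_zeros: "h \<in> Stab \<Longrightarrow> finv h zeros = zeros"
  by (metis (mono_tags, lifting) Stab_def mem_Collect_eq thompsonV_finv_f)

lemma Stab_id: "id \<in> Stab"
  by (simp add: Stab_def thompsonV_id)

lemma tau_in_Stab: "tau \<in> Stab"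
  by (simp add: Stab_def tau_in_thompsonV tau_zeros)

lemma swap_in_Stab: "a \<parallel> b \<Longrightarrow> zeros \<notin> cyl a \<Longrightarrow> zeros \<notin> cyl b \<Longrightarrow> swap a b \<in> Stab"
  by (simp add: Stab_def swap_in_thompsonV swap_fixes_zeros)

lemma Stab_inj: "h \<in> Stab \<Longrightarrow> inj h"
  by (simp add: Stab_def bij_is_inj thompsonV_bij)

lemma replicate_False_ne_snoc_True: "replicate p False \<noteq> u @ [True]"
proof
  assume "replicate p False = u @ [True]"
  then have "True \<in> set (replicate p False)"
    by simp
  then show False
    by simp
qed

lemma replicate_False_eq_snoc_False:
  assumes "replicate p False = u @ [False]"
  shows "u = replicate (p - 1) False"
proof -
  have "butlast (replicate p False) = u"
    using assms by simp
  moreover have "butlast (replicate p False) = replicate (p - 1) False"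
    by (simp add: butlast_conv_take)
  ultimately show ?thesis
    by simp
qed

lemma maps_code_fixing_every_word_eq_id:
  assumes C: "complete_code C" and fixed: "\<And>w. w \<in> C \<Longrightarrow> maps_prefix h w w"
  shows "h = id"
proof
  fix x
  obtain w where w: "w \<in> C" "x \<in> cyl w"
    using C unfolding complete_code_def by blast
  define y where "y = shift (length w) x"
  have x: "pre w y = x"
    using pre_shift[OF w(2)] by (simp add: y_def)
  have "h (pre w y) = pre w y"
    using fixed[OF w(1)] unfolding maps_prefix_def by blast
  then show "h x = id x"
    unfolding x by simp
qed

lemma maps_prefix_swap_back:
  assumes C: "complete_code C" and h: "inj h"
    and w: "w \<in> C" "\<not> maps_prefix h w w" and w': "w' \<in> C" "maps_prefix h w w'"
  shows "maps_prefix (swap w' w \<circ> h) w w"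
    and "\<And>v. v \<in> C \<Longrightarrow> maps_prefix h v v \<Longrightarrow> maps_prefix (swap w' w \<circ> h) v v"
proof -
  have \<sigma>: "maps_prefix (swap w' w) v (if v = w' then w else if v = w then w' else v)"
    if "v \<in> C" for v
    using maps_prefix_swap_in_code[OF C w'(1) w(1) that] .
  show "maps_prefix (swap w' w \<circ> h) w w"
    using maps_prefix_comp[OF w'(2) \<sigma>[OF w'(1)]] by simp
  fix v
  assume v: "v \<in> C" "maps_prefix h v v"
  have "v \<noteq> w"
    using v(2) w(2) by blast
  moreover have "v \<noteq> w'"
    using maps_prefix_inj[OF h w'(2)] v(2) w(2) by blast
  ultimately show "maps_prefix (swap w' w \<circ> h) v v"
    using maps_prefix_comp[OF v(2) \<sigma>[OF v(1)]] by simp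
qed

lemma card_words: "card {m :: bool list. length m = n} = 2 ^ n"
  using card_lists_length_eq[of "UNIV :: bool set" n] by simp

lemma Stab_maps_code_words:
  assumes h: "h \<in> Stab"
  obtains A B p q where "complete_code A" "complete_code B" "2 \<le> card A" "card B = card A"
    "maps_code h A B" "replicate p False \<in> A" "maps_prefix h (replicate p False) (replicate q False)"
proof -
  obtain n where "acts_at_depth n h"
    using h thompsonV_iff by (auto simp: Stab_def)
  then have depth: "acts_at_depth (Suc n) h"
    by (rule acts_at_depth_mono) simp
  define A where "A = {m :: bool list. length m = Suc n}"
  define B where "B = {b. \<exists>a\<in>A. maps_prefix h a b}"
  have A: "complete_code A"
    unfolding A_def by (rule complete_code_words)
  have hAB: "maps_code h A B"
    unfolding maps_code_def
  proof (intro conjI ballI)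
    fix a
    assume a: "a \<in> A"
    then obtain b where "maps_prefix h a b"
      using depth unfolding acts_at_depth_def A_def by blast
    then show "\<exists>b\<in>B. maps_prefix h a b"
      unfolding B_def using a by blast
  qed (simp add: B_def)
  have "2 \<le> card A"
    unfolding A_def card_words by simp
  have rA: "replicate (Suc n) False \<in> A"
    by (simp add: A_def)
  then obtain m' where m': "maps_prefix h (replicate (Suc n) False) m'"
    using depth unfolding acts_at_depth_def A_def by blast
  have "h (pre (replicate (Suc n) False) zeros) = pre m' zeros"
    using m' unfolding maps_prefix_def by blast
  then have "pre m' zeros = h zeros"
    by (simp only: pre_replicate_zeros)
  then have "pre m' zeros = zeros"
    using h by (simp add: Stab_def)
  then obtain q where "m' = replicate q False"
    using pre_zeros_eq_zeros_iff by blast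
  then show ?thesis
    using that[OF A _ \<open>2 \<le> card A\<close> _ hAB rA] m' h A complete_code_image[OF _ A hAB]
      maps_code_card[OF Stab_inj[OF h] _ hAB]
    by (simp add: Stab_def complete_code_def)
qed

locale stabiliser_hom = comm_group G for G :: "('a, 'b) monoid_scheme" (structure) +
  fixes \<phi> :: "(cantor \<Rightarrow> cantor) \<Rightarrow> 'a"
  assumes hom_closed: "h \<in> Stab \<Longrightarrow> \<phi> h \<in> carrier G"
    and hom_mult: "g \<in> Stab \<Longrightarrow> h \<in> Stab \<Longrightarrow> \<phi> (g \<circ> h) = \<phi> g \<otimes> \<phi> h"
begin

lemma hom_id: "\<phi> id = \<one>"
proof -
  have "\<phi> id \<otimes> \<phi> id = \<phi> id \<otimes> \<one>"
    using hom_mult[OF Stab_id Stab_id] hom_closed[OF Stab_id] by simp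
  then show ?thesis
    using hom_closed[OF Stab_id] by (metis l_cancel one_closed)
qed

lemma hom_involution:
  assumes "h \<in> Stab" "h \<circ> h = id"
  shows "\<phi> h \<otimes> \<phi> h = \<one>"
  using hom_mult[OF assms(1,1)] assms(2) hom_id by simp

definition slope_law :: "(cantor \<Rightarrow> cantor) \<Rightarrow> bool" where
  "slope_law h \<longleftrightarrow> h \<in> Stab \<and> \<phi> h = \<phi> tau [^] log2_slope h zeros"

lemma slope_law_comp:
  assumes g: "slope_law g" and h: "slope_law h"
  shows "slope_law (g \<circ> h)"
proof -
  have Stab: "g \<in> Stab" "h \<in> Stab"
    using g h by (simp_all add: slope_law_def)
  then have "log2_slope (g \<circ> h) zeros = log2_slope g zeros + log2_slope h zeros"
    by (simp add: Stab_def log2_slope_comp)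
  then show ?thesis
    using g h Stab hom_closed[OF tau_in_Stab]
    by (simp add: slope_law_def hom_mult Stab_comp int_pow_mult)
qed

lemma slope_law_cancel:
  assumes g: "slope_law g" and gh: "slope_law (g \<circ> h)" and h: "h \<in> Stab"
  shows "slope_law h"
proof -
  have "g \<in> Stab"
    using g by (simp add: slope_law_def)
  then have "log2_slope (g \<circ> h) zeros = log2_slope g zeros + log2_slope h zeros"
    using h by (simp add: Stab_def log2_slope_comp)
  then have "\<phi> g \<otimes> \<phi> h = \<phi> g \<otimes> \<phi> tau [^] log2_slope h zeros"
    using g gh h \<open>g \<in> Stab\<close> hom_closed[OF tau_in_Stab]
    by (simp add: slope_law_def hom_mult int_pow_mult)
  then show ?thesis
    using h \<open>g \<in> Stab\<close> hom_closed hom_closed[OF tau_in_Stab] by (simp add: slope_law_def)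
qed

lemma slope_law_id: "slope_law id"
  by (simp add: slope_law_def Stab_id hom_id log2_slope_id)

lemma slope_law_tau: "slope_law tau"
  by (simp add: slope_law_def tau_in_Stab log2_slope_tau_zeros hom_closed)

lemma slope_law_swap:
  assumes ab: "a \<parallel> b" and a: "zeros \<notin> cyl a" and b: "zeros \<notin> cyl b"
  shows "slope_law (swap a b)"
proof -
  define s\<^sub>1 where "s\<^sub>1 = swap (a @ [False]) (b @ [False])"
  define s\<^sub>2 where "s\<^sub>2 = swap (a @ [False]) (a @ [True])"
  define s\<^sub>3 where "s\<^sub>3 = swap (b @ [False]) (b @ [True])"
  have sib: "u @ [False] \<parallel> u @ [True]" for u :: "bool list"
    by (auto simp: parallel_def prefix_def)
  have par: "a @ [False] \<parallel> b @ [False]"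
    using ab by (rule parallel_append)
  have out: "zeros \<notin> cyl (u @ [e])" if "zeros \<notin> cyl u" for u e
    using that cyl_append_subset by blast
  have Stab: "s\<^sub>1 \<in> Stab" "s\<^sub>2 \<in> Stab" "s\<^sub>3 \<in> Stab"
    unfolding s\<^sub>1_def s\<^sub>2_def s\<^sub>3_def using swap_in_Stab par sib out a b by blast+
  have "s\<^sub>1 \<circ> s\<^sub>1 = id" "s\<^sub>2 \<circ> s\<^sub>2 = id" "s\<^sub>3 \<circ> s\<^sub>3 = id"
    unfolding s\<^sub>1_def s\<^sub>2_def s\<^sub>3_def using swap_comp_self par sib by blast+
  then have sq: "\<phi> s\<^sub>1 \<otimes> \<phi> s\<^sub>1 = \<one>" "\<phi> s\<^sub>2 \<otimes> \<phi> s\<^sub>2 = \<one>" "\<phi> s\<^sub>3 \<otimes> \<phi> s\<^sub>3 = \<one>"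
    using hom_involution Stab by blast+
  define t where "t = s\<^sub>2 \<circ> s\<^sub>3"
  have t: "t \<in> Stab" "\<phi> t = \<phi> s\<^sub>2 \<otimes> \<phi> s\<^sub>3"
    using Stab by (simp_all add: t_def Stab_comp hom_mult)
  have closed: "\<phi> s\<^sub>1 \<in> carrier G" "\<phi> s\<^sub>2 \<in> carrier G" "\<phi> s\<^sub>3 \<in> carrier G"
    using Stab hom_closed by blast+
  have "\<phi> (swap a b) = \<phi> (s\<^sub>1 \<circ> t \<circ> s\<^sub>1 \<circ> t)"
    using swap_eq_commutator[OF ab] by (simp add: s\<^sub>1_def t_def s\<^sub>2_def s\<^sub>3_def)
  also have "\<dots> = (\<phi> s\<^sub>1 \<otimes> \<phi> s\<^sub>1) \<otimes> (\<phi> s\<^sub>2 \<otimes> \<phi> s\<^sub>2) \<otimes> (\<phi> s\<^sub>3 \<otimes> \<phi> s\<^sub>3)"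
    using Stab t closed by (simp add: Stab_comp hom_mult m_ac)
  also have "\<dots> = \<one>"
    using sq by simp
  finally show ?thesis
    using swap_in_Stab[OF ab a b] swap_fixes_zeros[OF ab a b] by (simp add: slope_law_def)
qed

lemma slope_law_swap_in_code:
  assumes C: "complete_code C" "[False] \<in> C"
    and ab: "a \<in> C" "b \<in> C" "a \<noteq> [False]" "b \<noteq> [False]"
  shows "slope_law (swap a b)"
proof (cases "a = b")
  case True
  then show ?thesis
    by (simp add: swap_self slope_law_id)
next
  case False
  have "zeros \<notin> cyl w" if "w \<in> C" "w \<noteq> [False]" for w
    using complete_code_unique[OF C(1) that(1) C(2) _ zeros_in_cyl_False] that(2) by blast
  then show ?thesis
    using slope_law_swap complete_code_parallel[OF C(1) ab(1,2) False] ab by blast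
qed

lemma slope_law_Stab: "slope_law h \<Longrightarrow> h \<in> Stab"
  by (simp add: slope_law_def)

lemma slope_law_expand_False:
  assumes g: "slope_law g" and gA: "maps_code g A (comb (Suc n))"
    and u: "u \<in> A" "maps_prefix g u [False]"
  shows "\<exists>g'. slope_law g' \<and> maps_code g' (expand u A) (comb (Suc (Suc n)))
    \<and> maps_prefix g' (u @ [False]) [False]"
proof (intro exI conjI)
  show "slope_law (tau \<circ> g)"
    using slope_law_comp[OF slope_law_tau g] .
  have "maps_code g (expand u A) (expand [False] (comb (Suc n)))"
    using maps_code_expand[OF Stab_inj[OF slope_law_Stab[OF g]] gA u] .
  then show "maps_code (tau \<circ> g) (expand u A) (comb (Suc (Suc n)))"
    using maps_code_comp tau_maps_expand_comb by blast
  have "maps_prefix g (u @ [False]) [False, False]"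
    using maps_prefix_append[OF u(2), of "[False]"] by simp
  then show "maps_prefix (tau \<circ> g) (u @ [False]) [False]"
    using maps_prefix_comp maps_prefix_tau(1) by blast
qed

lemma slope_law_move_word:
  assumes g: "slope_law g" and gA: "maps_code g A (comb (Suc n))"
    and u: "u \<in> A" and v: "v \<in> A" "maps_prefix g v [False]" "u \<noteq> v"
    and r: "r \<in> comb (Suc n)" "r \<noteq> [False]"
  shows "\<exists>g'. slope_law g' \<and> maps_code g' A (comb (Suc n)) \<and> maps_prefix g' u r
    \<and> maps_prefix g' v [False]"
proof -
  let ?C = "comb (Suc n)"
  have C: "complete_code ?C" "[False] \<in> ?C"
    by (rule complete_code_comb, rule False_in_comb)
  obtain s where s: "s \<in> ?C" "maps_prefix g u s"
    using gA u unfolding maps_code_def by blast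
  have "s \<noteq> [False]"
    using maps_prefix_inj[OF Stab_inj[OF slope_law_Stab[OF g]] s(2)] v by blast
  then have \<sigma>: "slope_law (swap s r)"
    using slope_law_swap_in_code[OF C s(1) r(1)] r(2) by blast
  have "maps_prefix (swap s r) s r"
    using maps_prefix_swap_in_code[OF C(1) s(1) r(1) s(1)] by simp
  moreover have "maps_prefix (swap s r) [False] [False]"
    using maps_prefix_swap_in_code[OF C(1) s(1) r(1) C(2)] \<open>s \<noteq> [False]\<close> r(2) by simp
  ultimately have "maps_prefix (swap s r \<circ> g) u r" "maps_prefix (swap s r \<circ> g) v [False]"
    using maps_prefix_comp s(2) v(2) by blast+
  moreover have "maps_code (swap s r \<circ> g) A (comb (Suc n))"
    using maps_code_comp[OF gA maps_code_swap[OF C(1) s(1) r(1)]] .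
  ultimately show ?thesis
    using slope_law_comp[OF \<sigma> g] by blast
qed

text \<open>Induction on the size of the code, which is an expansion of a smaller code at a word
  \<open>u\<close>: if \<open>u0\<close> is the zero word, \<open>\<tau>\<close> turns the expanded comb into the next comb;
  otherwise a swap first moves the image of \<open>u\<close> to the last word \<open>1\<^sup>n\<close> of the comb,
  whose expansion is again a comb.\<close>
lemma slope_law_onto_comb:
  assumes "complete_code A" "card A = Suc (Suc n)" "replicate p False \<in> A"
  shows "\<exists>g. slope_law g \<and> maps_code g A (comb (Suc n)) \<and> maps_prefix g (replicate p False) [False]"
  using assms
proof (induction n arbitrary: A p)
  case 0
  then have A: "A = comb (Suc 0)"
    using complete_code_card_2 by simp
  then have "replicate p False = [False]"
    using "0.prems"(3) replicate_False_ne_snoc_True[of p "[]"] by auto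
  then have "maps_prefix id (replicate p False) [False]"
    by (simp only: maps_prefix_id)
  then show ?case
    unfolding A using slope_law_id maps_code_id by blast
next
  case (Suc n)
  have "2 \<le> card A"
    using Suc.prems(2) by simp
  then obtain u A' where A': "complete_code A'" "u \<in> A'" "A = expand u A'"
    "card A' = card A - 1"
    using complete_code_eq_expand[OF Suc.prems(1)] by blast
  then have card: "card A' = Suc (Suc n)"
    using Suc.prems(2) by simp
  consider "replicate p False = u @ [False]" | "replicate p False \<in> A'" "replicate p False \<noteq> u"
    using Suc.prems(3) A'(3) replicate_False_ne_snoc_True by (auto simp: expand_def)
  then show ?case
  proof cases
    case 1
    then have u: "u = replicate (p - 1) False"
      by (rule replicate_False_eq_snoc_False)
    obtain g where "slope_law g" "maps_code g A' (comb (Suc n))" "maps_prefix g u [False]"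
      using Suc.IH[OF A'(1) card, of "p - 1"] A'(2) unfolding u by blast
    then show ?thesis
      using slope_law_expand_False[of g A' n u] A'(2,3) 1 by simp
  next
    case 2
    obtain g where g: "slope_law g" "maps_code g A' (comb (Suc n))"
      "maps_prefix g (replicate p False) [False]"
      using Suc.IH[OF A'(1) card 2(1)] by blast
    have R: "replicate (Suc n) True \<in> comb (Suc n)" "replicate (Suc n) True \<noteq> [False]"
      by (rule replicate_True_in_comb) simp
    have "u \<noteq> replicate p False"
      using 2(2) by (rule not_sym)
    then obtain g' where g': "slope_law g'" "maps_code g' A' (comb (Suc n))"
      "maps_prefix g' u (replicate (Suc n) True)" "maps_prefix g' (replicate p False) [False]"
      using slope_law_move_word[OF g(1,2) A'(2) 2(1) g(3) _ R] by blast
    have "maps_code g' A (comb (Suc (Suc n)))"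
      unfolding A'(3) comb_Suc_expand[of "Suc n"]
      using maps_code_expand[OF Stab_inj[OF slope_law_Stab[OF g'(1)]] g'(2) A'(2) g'(3)] .
    then show ?thesis
      using g' by blast
  qed
qed

lemma slope_law_permutation:
  assumes C: "complete_code C" "[False] \<in> C"
    and h: "h \<in> Stab" "maps_code h C C" "maps_prefix h [False] [False]"
  shows "slope_law h"
  using h
proof (induction "card {w \<in> C. \<not> maps_prefix h w w}" arbitrary: h rule: less_induct)
  case less
  show ?case
  proof (cases "{w \<in> C. \<not> maps_prefix h w w} = {}")
    case True
    then have "h = id"
      using maps_code_fixing_every_word_eq_id[OF C(1)] by blast
    then show ?thesis
      by (simp add: slope_law_id)
  next
    case False
    then obtain w where w: "w \<in> C" "\<not> maps_prefix h w w"
      by blast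
    then obtain w' where w': "w' \<in> C" "maps_prefix h w w'"
      using less.prems(2) unfolding maps_code_def by blast
    have inj: "inj h"
      using Stab_inj less.prems(1) .
    have "w \<noteq> [False]"
      using w(2) less.prems(3) by blast
    moreover have "w' \<noteq> [False]"
      using maps_prefix_inj[OF inj w'(2)] less.prems(3) calculation by blast
    ultimately have \<sigma>: "slope_law (swap w' w)"
      using slope_law_swap_in_code[OF C w'(1) w(1)] by blast
    define h2 where "h2 = swap w' w \<circ> h"
    have h2: "h2 \<in> Stab" "maps_code h2 C C"
      using Stab_comp[OF slope_law_Stab[OF \<sigma>] less.prems(1)]
        maps_code_comp[OF less.prems(2) maps_code_swap[OF C(1) w'(1) w(1)]]
      by (simp_all add: h2_def)
    note fixed = maps_prefix_swap_back[OF C(1) inj w w', folded h2_def]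
    have "{v \<in> C. \<not> maps_prefix h2 v v} \<subset> {v \<in> C. \<not> maps_prefix h v v}"
      using fixed w by blast
    then have "card {v \<in> C. \<not> maps_prefix h2 v v} < card {v \<in> C. \<not> maps_prefix h v v}"
      using C(1) by (simp add: complete_code_def psubset_card_mono)
    then have "slope_law h2"
      using less.hyps h2 fixed(2)[OF C(2) less.prems(3)] by blast
    then show ?thesis
      using slope_law_cancel[OF \<sigma> _ less.prems(1)] by (simp add: h2_def)
  qed
qed

text \<open>Normal forms \<open>g\<^sub>A, g\<^sub>B\<close> of the codes on which \<open>h\<close> acts turn \<open>h\<close> into
  \<open>g\<^sub>B \<circ> h \<circ> g\<^sub>A\<^sup>-\<^sup>1\<close>, a permutation of the cylinders of a comb.\<close>
lemma slope_law_if_Stab: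
  assumes h: "h \<in> Stab"
  shows "slope_law h"
proof -
  obtain A B p q where A: "complete_code A" "2 \<le> card A" and B: "complete_code B" "card B = card A"
    and hAB: "maps_code h A B" and p: "replicate p False \<in> A"
    and pq: "maps_prefix h (replicate p False) (replicate q False)"
    using Stab_maps_code_words[OF h] by metis
  define k where "k = card A - 2"
  have k: "card A = Suc (Suc k)" "card B = Suc (Suc k)"
    using A(2) B(2) by (simp_all add: k_def)
  have "replicate q False \<in> B"
    using hAB p pq maps_prefix_unique unfolding maps_code_def by blast
  then obtain gB where gB: "slope_law gB" "maps_code gB B (comb (Suc k))"
    "maps_prefix gB (replicate q False) [False]"
    using slope_law_onto_comb[OF B(1) k(2)] by blast
  obtain gA where gA: "slope_law gA" "maps_code gA A (comb (Suc k))"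
    "maps_prefix gA (replicate p False) [False]"
    using slope_law_onto_comb[OF A(1) k(1) p] by blast
  have bij_gA: "bij gA"
    using slope_law_Stab[OF gA(1)] by (simp add: Stab_def thompsonV_bij)
  define h' where "h' = gB \<circ> h \<circ> finv gA"
  have "h' \<in> Stab"
    unfolding h'_def by (intro Stab_comp Stab_finv slope_law_Stab gA(1) gB(1) h)
  moreover have "maps_code h' (comb (Suc k)) (comb (Suc k))"
    unfolding h'_def
    by (rule maps_code_comp[OF maps_code_finv[OF bij_gA gA(2)] maps_code_comp[OF hAB gB(2)]])
  moreover have "maps_prefix h' [False] [False]"
    unfolding h'_def
    by (rule maps_prefix_comp[OF maps_prefix_finv[OF bij_gA gA(3)] maps_prefix_comp[OF pq gB(3)]])
  ultimately have "slope_law h'"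
    using slope_law_permutation complete_code_comb False_in_comb by blast
  then have "slope_law (h' \<circ> gA)"
    using slope_law_comp gA(1) by blast
  moreover have "h' \<circ> gA = gB \<circ> h"
    using bij_gA by (simp add: h'_def fun_eq_iff bij_is_inj)
  ultimately have "slope_law (gB \<circ> h)"
    by simp
  then show ?thesis
    using slope_law_cancel[OF gB(1) _ h] by blast
qed

theorem hom_eq_tau_power: "h \<in> Stab \<Longrightarrow> \<phi> h = \<phi> tau [^] log2_slope h zeros"
  using slope_law_if_Stab by (simp add: slope_law_def)

end

section \<open>Cocycles\<close>

definition transport :: "cantor \<Rightarrow> cantor \<Rightarrow> cantor" where
  "transport x = (SOME g. g \<in> thompsonV \<and> g zeros = x)"

lemma transport: "x \<in> Q2 \<Longrightarrow> transport x \<in> thompsonV \<and> transport x zeros = x"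
  unfolding transport_def using thompsonV_transitive_Q2 by (rule someI2_bex) blast

lemma finv_transport: "x \<in> Q2 \<Longrightarrow> finv (transport x) x = zeros"
  using transport thompsonV_finv_f by metis

definition coboundary :: "('a, 'b) monoid_scheme \<Rightarrow> (cantor \<Rightarrow> 'a) \<Rightarrow> (cantor \<Rightarrow> cantor) \<Rightarrow> cantor \<Rightarrow> 'a" where
  "coboundary L f = (\<lambda>v\<in>thompsonV. \<lambda>x\<in>Q2. f x \<otimes>\<^bsub>L\<^esub> inv\<^bsub>L\<^esub> f (finv v x))"

context comm_group
begin

lemma PQ_carrier: "carrier (PQ G) = (\<Pi>\<^sub>E x\<in>Q2. carrier G)"
  by (simp add: PQ_def)

lemma PQ_closed: "f \<in> carrier (PQ G) \<Longrightarrow> x \<in> Q2 \<Longrightarrow> f x \<in> carrier G"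
  by (auto simp: PQ_carrier dest: PiE_mem)

lemma PQ_mult: "f \<otimes>\<^bsub>PQ G\<^esub> g = (\<lambda>x\<in>Q2. f x \<otimes> g x)"
  by (simp add: PQ_def)

lemma PQ_comm_group: "comm_group (PQ G)"
proof (rule group.group_comm_groupI)
  show "group (PQ G)"
    unfolding PQ_def by (simp add: is_group)
  fix f g
  assume "f \<in> carrier (PQ G)" "g \<in> carrier (PQ G)"
  then show "f \<otimes>\<^bsub>PQ G\<^esub> g = g \<otimes>\<^bsub>PQ G\<^esub> f"
    unfolding PQ_mult by (intro restrict_ext) (simp add: PQ_closed m_comm)
qed

interpretation PQ: comm_group "PQ G"
  by (rule PQ_comm_group)

lemma Coc_closed: "c \<in> Coc G \<Longrightarrow> v \<in> thompsonV \<Longrightarrow> x \<in> Q2 \<Longrightarrow> c v x \<in> carrier G"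
  unfolding Coc_def by (auto dest!: PiE_mem)

lemma Coc_comp:
  "c \<in> Coc G \<Longrightarrow> v \<in> thompsonV \<Longrightarrow> w \<in> thompsonV \<Longrightarrow> x \<in> Q2 \<Longrightarrow>
    c (v \<circ> w) x = c v x \<otimes> c w (finv v x)"
  unfolding Coc_def by blast

lemma Coc_iff:
  "c \<in> Coc G \<longleftrightarrow> c \<in> (\<Pi>\<^sub>E v\<in>thompsonV. \<Pi>\<^sub>E x\<in>Q2. carrier G) \<and>
    (\<forall>v\<in>thompsonV. \<forall>w\<in>thompsonV. \<forall>x\<in>Q2. c (v \<circ> w) x = c v x \<otimes> c w (finv v x))"
  unfolding Coc_def by blast

lemma Coc_stabiliser_hom:
  assumes c: "c \<in> Coc G"
  shows "stabiliser_hom G (\<lambda>h. c h zeros)"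
proof unfold_locales
  show "c h zeros \<in> carrier G" if "h \<in> Stab" for h
    using Coc_closed[OF c] that zeros_in_Q2 by (simp add: Stab_def)
  show "c (g \<circ> h) zeros = c g zeros \<otimes> c h zeros" if "g \<in> Stab" "h \<in> Stab" for g h
    using Coc_comp[OF c _ _ zeros_in_Q2] that Stab_finv_zeros by (simp add: Stab_def)
qed

lemma sC_apply: "v \<in> thompsonV \<Longrightarrow> x \<in> Q2 \<Longrightarrow> sC G z v x = z [^] log2_slope v (finv v x)"
  by (simp add: sC_def)

lemma sC_in_Coc:
  assumes z: "z \<in> carrier G"
  shows "sC G z \<in> Coc G"
  unfolding Coc_iff
proof (intro conjI ballI)
  show "sC G z \<in> (\<Pi>\<^sub>E v\<in>thompsonV. \<Pi>\<^sub>E x\<in>Q2. carrier G)"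
    using z by (simp add: sC_def)
  fix v w x
  assume v: "v \<in> thompsonV" and w: "w \<in> thompsonV" and x: "x \<in> Q2"
  have "log2_slope (v \<circ> w) (finv (v \<circ> w) x) = log2_slope v (finv v x) + log2_slope w (finv w (finv v x))"
    using log2_slope_comp[OF v w] thompsonV_finv_comp[OF v w] w by simp
  then show "sC G z (v \<circ> w) x = sC G z v x \<otimes> sC G z w (finv v x)"
    using v w x z thompsonV_comp thompsonV_finv_Q2 by (simp add: sC_apply int_pow_mult)
qed

lemma Coc_mult_closed:
  assumes c: "c \<in> Coc G" and d: "d \<in> Coc G"
  shows "(\<lambda>v\<in>thompsonV. \<lambda>x\<in>Q2. c v x \<otimes> d v x) \<in> Coc G"
  unfolding Coc_iff
proof (intro conjI ballI)
  show "(\<lambda>v\<in>thompsonV. \<lambda>x\<in>Q2. c v x \<otimes> d v x) \<in> (\<Pi>\<^sub>E v\<in>thompsonV. \<Pi>\<^sub>E x\<in>Q2. carrier G)"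
    using Coc_closed[OF c] Coc_closed[OF d] by simp
  fix v w x
  assume v: "v \<in> thompsonV" and w: "w \<in> thompsonV" and x: "x \<in> Q2"
  then show "(\<lambda>v\<in>thompsonV. \<lambda>x\<in>Q2. c v x \<otimes> d v x) (v \<circ> w) x =
      (\<lambda>v\<in>thompsonV. \<lambda>x\<in>Q2. c v x \<otimes> d v x) v x \<otimes> (\<lambda>v\<in>thompsonV. \<lambda>x\<in>Q2. c v x \<otimes> d v x) w (finv v x)"
    using Coc_comp[OF c v w x] Coc_comp[OF d v w x] Coc_closed[OF c] Coc_closed[OF d]
      thompsonV_comp thompsonV_finv_Q2
    by (simp add: m_ac)
qed

lemma Coc_inv_closed:
  assumes c: "c \<in> Coc G"
  shows "(\<lambda>v\<in>thompsonV. \<lambda>x\<in>Q2. inv (c v x)) \<in> Coc G"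
  unfolding Coc_iff
proof (intro conjI ballI)
  show "(\<lambda>v\<in>thompsonV. \<lambda>x\<in>Q2. inv (c v x)) \<in> (\<Pi>\<^sub>E v\<in>thompsonV. \<Pi>\<^sub>E x\<in>Q2. carrier G)"
    using Coc_closed[OF c] by simp
  fix v w x
  assume v: "v \<in> thompsonV" and w: "w \<in> thompsonV" and x: "x \<in> Q2"
  then show "(\<lambda>v\<in>thompsonV. \<lambda>x\<in>Q2. inv (c v x)) (v \<circ> w) x =
      (\<lambda>v\<in>thompsonV. \<lambda>x\<in>Q2. inv (c v x)) v x \<otimes> (\<lambda>v\<in>thompsonV. \<lambda>x\<in>Q2. inv (c v x)) w (finv v x)"
    using Coc_comp[OF c v w x] Coc_closed[OF c] thompsonV_comp thompsonV_finv_Q2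
    by (simp add: inv_mult)
qed

lemma Coc_coboundary:
  assumes d: "d \<in> Coc G" and stab: "\<And>h. h \<in> Stab \<Longrightarrow> d h zeros = \<one>"
  defines "f \<equiv> \<lambda>x\<in>Q2. d (transport x) x"
  shows "f \<in> carrier (PQ G)"
    and "\<And>v x. v \<in> thompsonV \<Longrightarrow> x \<in> Q2 \<Longrightarrow> d v x = f x \<otimes> inv (f (finv v x))"
proof -
  show "f \<in> carrier (PQ G)"
    using Coc_closed[OF d] transport by (simp add: f_def PQ_def)
  fix v x
  assume v: "v \<in> thompsonV" and x: "x \<in> Q2"
  define y where "y = finv v x"
  define a where "a = transport x"
  define b where "b = transport y"
  have y: "y \<in> Q2"
    using thompsonV_finv_Q2 v x by (simp add: y_def)
  have a: "a \<in> thompsonV" "finv a x = zeros"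
    using transport[OF x] finv_transport[OF x] by (simp_all add: a_def)
  have b: "b \<in> thompsonV" "b zeros = y"
    using transport[OF y] by (simp_all add: b_def)
  define h where "h = finv a \<circ> v \<circ> b"
  have h: "h \<in> Stab"
    using a b v by (simp add: h_def Stab_def y_def thompsonV_comp thompsonV_finv)
  have "d a x \<otimes> d h (finv a x) = d (a \<circ> h) x"
    using Coc_comp[OF d a(1) _ x] h by (simp add: Stab_def)
  also have "a \<circ> h = v \<circ> b"
    using a(1) by (simp add: h_def fun_eq_iff)
  also have "d (v \<circ> b) x = d v x \<otimes> d b y"
    using Coc_comp[OF d v b(1) x] by (simp add: y_def)
  finally have "d a x \<otimes> d h (finv a x) = d v x \<otimes> d b y" .
  then have "f x = d v x \<otimes> f y"
    using stab[OF h] a Coc_closed[OF d a(1) x] x y by (simp add: f_def a_def b_def)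
  moreover have "f y \<in> carrier G"
    using \<open>f \<in> carrier (PQ G)\<close> y by (auto simp: PQ_def dest: PiE_mem)
  ultimately show "d v x = f x \<otimes> inv (f y)"
    using Coc_closed[OF d v x] by (simp add: m_assoc)
qed

lemma coboundary_in_Coc:
  assumes f: "f \<in> carrier (PQ G)"
  shows "coboundary G f \<in> Coc G"
  unfolding Coc_iff
proof (intro conjI ballI)
  show "coboundary G f \<in> (\<Pi>\<^sub>E v\<in>thompsonV. \<Pi>\<^sub>E x\<in>Q2. carrier G)"
    using f thompsonV_finv_Q2 by (simp add: coboundary_def PQ_closed)
  fix v w x
  assume v: "v \<in> thompsonV" and w: "w \<in> thompsonV" and x: "x \<in> Q2"
  define y z where "y = finv v x" and "z = finv w y"
  have yz: "y \<in> Q2" "z \<in> Q2"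
    using v w x thompsonV_finv_Q2 by (simp_all add: y_def z_def)
  have "inv f y \<otimes> (f y \<otimes> inv f z) = inv f z"
    using f yz by (simp add: PQ_closed m_assoc[symmetric])
  then show "coboundary G f (v \<circ> w) x = coboundary G f v x \<otimes> coboundary G f w (finv v x)"
    using v w x f yz thompsonV_comp thompsonV_finv_comp[OF v w]
    by (simp add: coboundary_def PQ_closed m_assoc y_def z_def)
qed

lemma decomp_iff:
  assumes "z \<in> carrier G" "f \<in> carrier (PQ G)"
  shows "decomp G c z f \<longleftrightarrow>
    (\<forall>v\<in>thompsonV. \<forall>x\<in>Q2. c v x = sC G z v x \<otimes> coboundary G f v x)"
  using assms thompsonV_finv_Q2
  by (simp add: decomp_def coboundary_def sC_apply PQ_closed m_assoc)

lemma decomp_exists: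
  assumes c: "c \<in> Coc G"
  shows "\<exists>f\<in>carrier (PQ G). decomp G c (c tau zeros) f"
proof -
  define \<zeta> where "\<zeta> = c tau zeros"
  have \<zeta>: "\<zeta> \<in> carrier G"
    using Coc_closed[OF c tau_in_thompsonV zeros_in_Q2] by (simp add: \<zeta>_def)
  define s' where "s' = (\<lambda>v\<in>thompsonV. \<lambda>x\<in>Q2. inv (sC G \<zeta> v x))"
  define d where "d = (\<lambda>v\<in>thompsonV. \<lambda>x\<in>Q2. c v x \<otimes> s' v x)"
  have d: "d \<in> Coc G"
    unfolding d_def s'_def using Coc_mult_closed[OF c Coc_inv_closed[OF sC_in_Coc[OF \<zeta>]]] .
  have d_apply: "d v x = c v x \<otimes> inv (sC G \<zeta> v x)" if "v \<in> thompsonV" "x \<in> Q2" for v x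
    using that by (simp add: d_def s'_def)
  have "d h zeros = \<one>" if "h \<in> Stab" for h
  proof -
    have "c h zeros = \<zeta> [^] log2_slope h zeros"
      using stabiliser_hom.hom_eq_tau_power[OF Coc_stabiliser_hom[OF c] that] by (simp add: \<zeta>_def)
    moreover have "sC G \<zeta> h zeros = \<zeta> [^] log2_slope h zeros"
      using that zeros_in_Q2 by (simp add: Stab_def sC_apply Stab_finv_zeros)
    ultimately show ?thesis
      using that zeros_in_Q2 \<zeta> by (simp add: Stab_def d_apply)
  qed
  then obtain f where f: "f \<in> carrier (PQ G)"
    and cob: "\<And>v x. v \<in> thompsonV \<Longrightarrow> x \<in> Q2 \<Longrightarrow> d v x = coboundary G f v x"
    using Coc_coboundary[OF d] by (auto simp: coboundary_def)
  have dec: "c v x = sC G \<zeta> v x \<otimes> coboundary G f v x" if "v \<in> thompsonV" "x \<in> Q2" for v x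
  proof -
    have closed: "c v x \<in> carrier G" "sC G \<zeta> v x \<in> carrier G"
      using Coc_closed[OF c that] Coc_closed[OF sC_in_Coc[OF \<zeta>] that] .
    have "sC G \<zeta> v x \<otimes> coboundary G f v x = sC G \<zeta> v x \<otimes> (c v x \<otimes> inv (sC G \<zeta> v x))"
      using cob[OF that] d_apply[OF that] by simp
    also have "\<dots> = c v x \<otimes> (sC G \<zeta> v x \<otimes> inv (sC G \<zeta> v x))"
      using closed by (simp add: m_lcomm)
    finally show ?thesis
      using closed by simp
  qed
  have "decomp G c \<zeta> f"
    using decomp_iff[OF \<zeta> f] dec by blast
  then show ?thesis
    using f by (auto simp: \<zeta>_def)
qed

lemma decomp_zeta:
  assumes "decomp G c z f" "z \<in> carrier G" "f \<in> carrier (PQ G)"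
  shows "z = c tau zeros"
proof -
  have "finv tau zeros = zeros"
    using Stab_finv_zeros[OF tau_in_Stab] .
  then show ?thesis
    using assms tau_in_thompsonV zeros_in_Q2 log2_slope_tau_zeros
    by (simp add: decomp_def sC_apply PQ_closed m_assoc)
qed

lemma decomp_unique:
  assumes d: "decomp G c z f" "decomp G c z' f'"
    and zf: "z \<in> carrier G" "f \<in> carrier (PQ G)" "z' \<in> carrier G" "f' \<in> carrier (PQ G)"
  shows "z = z' \<and> (\<exists>a\<in>carrier G. \<forall>x\<in>Q2. f' x = f x \<otimes> a)"
proof
  show zz: "z = z'"
    using decomp_zeta[OF d(1) zf(1,2)] decomp_zeta[OF d(2) zf(3,4)] by simp
  have "f' x = f x \<otimes> (inv f zeros \<otimes> f' zeros)" if x: "x \<in> Q2" for x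
  proof -
    define g where "g = transport x"
    have g: "g \<in> thompsonV" "finv g x = zeros"
      using transport[OF x] finv_transport[OF x] by (simp_all add: g_def)
    have s: "sC G z g x \<in> carrier G"
      using g(1) x zf(1) by (simp add: sC_apply)
    have "sC G z g x \<otimes> f x \<otimes> inv f zeros = sC G z g x \<otimes> f' x \<otimes> inv f' zeros"
      using d(1)[unfolded decomp_def, rule_format, OF g(1) x]
        d(2)[unfolded decomp_def, rule_format, OF g(1) x] g(2) zz by simp
    then have "sC G z g x \<otimes> (f x \<otimes> inv f zeros) = sC G z g x \<otimes> (f' x \<otimes> inv f' zeros)"
      using s x zeros_in_Q2 zf by (simp add: PQ_closed m_assoc)
    then have e: "f x \<otimes> inv f zeros = f' x \<otimes> inv f' zeros"
      using s x zeros_in_Q2 zf by (simp add: PQ_closed)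
    have "f' x = (f' x \<otimes> inv f' zeros) \<otimes> f' zeros"
      using x zeros_in_Q2 zf by (simp add: PQ_closed m_assoc)
    also have "\<dots> = f x \<otimes> (inv f zeros \<otimes> f' zeros)"
      using x zeros_in_Q2 zf by (simp add: e[symmetric] PQ_closed m_assoc)
    finally show ?thesis .
  qed
  moreover have "inv f zeros \<otimes> f' zeros \<in> carrier G"
    using zf zeros_in_Q2 by (simp add: PQ_closed)
  ultimately show "\<exists>a\<in>carrier G. \<forall>x\<in>Q2. f' x = f x \<otimes> a"
    by blast
qed

lemma PQ_inv: "f \<in> carrier (PQ G) \<Longrightarrow> inv\<^bsub>PQ G\<^esub> f = (\<lambda>x\<in>Q2. inv (f x))"
  unfolding PQ_def by (simp add: is_group)

lemma CocG_mult: "c \<otimes>\<^bsub>CocG G\<^esub> d = (\<lambda>v\<in>thompsonV. \<lambda>x\<in>Q2. c v x \<otimes> d v x)"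
  by (simp add: CocG_def PQ_def)

lemma Coc_subgroup: "subgroup (Coc G) (product_group thompsonV (\<lambda>_. PQ G))"
proof (rule group.subgroupI)
  show "group (product_group thompsonV (\<lambda>_. PQ G))"
    by (simp add: PQ.is_group)
  show "Coc G \<subseteq> carrier (product_group thompsonV (\<lambda>_. PQ G))"
    by (auto simp: Coc_def PQ_def)
  show "Coc G \<noteq> {}"
    using sC_in_Coc[OF one_closed] by blast
  fix c d
  assume c: "c \<in> Coc G" and d: "d \<in> Coc G"
  have cv: "c v \<in> carrier (PQ G)" if "v \<in> thompsonV" for v
    using c that by (auto simp: Coc_def PQ_def)
  have "inv\<^bsub>product_group thompsonV (\<lambda>_. PQ G)\<^esub> c = (\<lambda>v\<in>thompsonV. inv\<^bsub>PQ G\<^esub> (c v))"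
    using c by (intro inv_product_group) (auto simp: Coc_def PQ_def PQ.is_group)
  also have "\<dots> = (\<lambda>v\<in>thompsonV. \<lambda>x\<in>Q2. inv (c v x))"
    using cv by (intro restrict_ext) (simp add: PQ_inv)
  finally show "inv\<^bsub>product_group thompsonV (\<lambda>_. PQ G)\<^esub> c \<in> Coc G"
    using Coc_inv_closed[OF c] by simp
  show "c \<otimes>\<^bsub>product_group thompsonV (\<lambda>_. PQ G)\<^esub> d \<in> Coc G"
    using Coc_mult_closed[OF c d] by (simp add: PQ_def)
qed

lemma CocG_comm_group: "comm_group (CocG G)"
proof (rule group.group_comm_groupI)
  show "group (CocG G)"
    unfolding CocG_def by (rule group.subgroup_imp_group[OF _ Coc_subgroup]) (simp add: PQ.is_group)
  fix c d
  assume "c \<in> carrier (CocG G)" "d \<in> carrier (CocG G)"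
  then show "c \<otimes>\<^bsub>CocG G\<^esub> d = d \<otimes>\<^bsub>CocG G\<^esub> c"
    unfolding CocG_mult by (intro restrict_ext) (simp add: CocG_def Coc_closed m_comm)
qed

lemma constQ_subgroup: "subgroup (constQ G) (PQ G)"
proof (rule PQ.subgroupI)
  show "constQ G \<subseteq> carrier (PQ G)"
    by (auto simp: constQ_def PQ_carrier)
  show "constQ G \<noteq> {}"
    by (auto simp: constQ_def)
  fix k k'
  assume "k \<in> constQ G" "k' \<in> constQ G"
  then obtain a b where ab: "a \<in> carrier G" "b \<in> carrier G" "k = (\<lambda>x\<in>Q2. a)" "k' = (\<lambda>x\<in>Q2. b)"
    by (auto simp: constQ_def)
  then have "inv\<^bsub>PQ G\<^esub> k = (\<lambda>x\<in>Q2. inv a)" "k \<otimes>\<^bsub>PQ G\<^esub> k' = (\<lambda>x\<in>Q2. a \<otimes> b)"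
    by (auto simp: PQ_inv PQ_carrier PQ_mult cong: restrict_cong)
  then show "inv\<^bsub>PQ G\<^esub> k \<in> constQ G" "k \<otimes>\<^bsub>PQ G\<^esub> k' \<in> constQ G"
    using ab by (auto simp: constQ_def)
qed

lemma constQ_normal: "constQ G \<lhd> PQ G"
  by (rule PQ.subgroup_imp_normal[OF constQ_subgroup])

lemma rcoset_constQ_mult_const:
  assumes f: "f \<in> carrier (PQ G)" and a: "a \<in> carrier G"
  shows "constQ G #>\<^bsub>PQ G\<^esub> (\<lambda>x\<in>Q2. f x \<otimes> a) = constQ G #>\<^bsub>PQ G\<^esub> f"
proof -
  define k where "k = (\<lambda>x\<in>Q2. a)"
  have k: "k \<in> constQ G" "k \<in> carrier (PQ G)"
    using a by (auto simp: k_def constQ_def PQ_carrier)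
  have "(\<lambda>x\<in>Q2. f x \<otimes> a) = k \<otimes>\<^bsub>PQ G\<^esub> f"
    unfolding PQ_mult k_def using f a by (intro restrict_ext) (simp add: PQ_closed m_comm)
  then have "constQ G #>\<^bsub>PQ G\<^esub> (\<lambda>x\<in>Q2. f x \<otimes> a) = (constQ G #>\<^bsub>PQ G\<^esub> k) #>\<^bsub>PQ G\<^esub> f"
    using PQ.coset_mult_assoc subgroup.subset[OF constQ_subgroup] k f by simp
  also have "constQ G #>\<^bsub>PQ G\<^esub> k = constQ G"
    using subgroup.rcos_const[OF constQ_subgroup PQ.is_group k(1)] .
  finally show ?thesis .
qed

lemma Coc_eqI:
  assumes "c \<in> Coc G" "d \<in> Coc G" "\<And>v x. v \<in> thompsonV \<Longrightarrow> x \<in> Q2 \<Longrightarrow> c v x = d v x"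
  shows "c = d"
proof (rule PiE_ext)
  show "c \<in> (\<Pi>\<^sub>E v\<in>thompsonV. \<Pi>\<^sub>E x\<in>Q2. carrier G)" "d \<in> (\<Pi>\<^sub>E v\<in>thompsonV. \<Pi>\<^sub>E x\<in>Q2. carrier G)"
    using assms(1,2) by (simp_all add: Coc_iff)
  fix v
  assume v: "v \<in> thompsonV"
  have "c v \<in> (\<Pi>\<^sub>E x\<in>Q2. carrier G)" "d v \<in> (\<Pi>\<^sub>E x\<in>Q2. carrier G)"
    using assms(1,2) v by (auto simp: Coc_iff dest: PiE_mem)
  then show "c v = d v"
    using assms(3)[OF v] by (rule PiE_ext)
qed

lemma coboundary_mult_const:
  assumes "f \<in> carrier (PQ G)" "a \<in> carrier G"
  shows "coboundary G (\<lambda>x\<in>Q2. a \<otimes> f x) = coboundary G f"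
proof -
  have "a \<otimes> p \<otimes> inv (a \<otimes> q) = p \<otimes> inv q" if "p \<in> carrier G" "q \<in> carrier G" for p q
  proof -
    have "a \<otimes> p \<otimes> inv (a \<otimes> q) = a \<otimes> p \<otimes> (inv a \<otimes> inv q)"
      using that assms(2) by (simp add: inv_mult)
    also have "\<dots> = (p \<otimes> inv q) \<otimes> (a \<otimes> inv a)"
      using that assms(2) by (simp only: m_ac m_closed inv_closed)
    finally show ?thesis
      using that assms(2) by simp
  qed
  then show ?thesis
    unfolding coboundary_def using assms thompsonV_finv_Q2
    by (intro restrict_ext) (simp add: PQ_closed)
qed

lemma Phi_eq:
  assumes z: "z \<in> carrier G" and f: "f \<in> carrier (PQ G)" and d: "decomp G c z f"
  shows "Phi G c = (z, constQ G #>\<^bsub>PQ G\<^esub> f)"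
proof -
  let ?P = "\<lambda>p. fst p \<in> carrier G \<and> snd p \<in> carrier (PQ G) \<and> decomp G c (fst p) (snd p)"
  define p where "p = (SOME p. ?P p)"
  have "?P (z, f)"
    using z f d by simp
  then have p: "?P p"
    unfolding p_def by (rule someI)
  then obtain a where a: "a \<in> carrier G" "\<forall>x\<in>Q2. snd p x = f x \<otimes> a" and "z = fst p"
    using decomp_unique[OF d _ z f] by blast
  moreover have "snd p = (\<lambda>x\<in>Q2. f x \<otimes> a)"
    using p a by (intro PiE_ext[of _ Q2 "\<lambda>_. carrier G"]) (auto simp: PQ_carrier PQ_closed[OF f])
  ultimately show ?thesis
    unfolding Phi_def Let_def p_def[symmetric] using rcoset_constQ_mult_const f by simp
qed

lemma decomp_mult:
  assumes c: "decomp G c z f" "z \<in> carrier G" "f \<in> carrier (PQ G)"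
    and d: "decomp G d z' f'" "z' \<in> carrier G" "f' \<in> carrier (PQ G)"
  shows "decomp G (c \<otimes>\<^bsub>CocG G\<^esub> d) (z \<otimes> z') (f \<otimes>\<^bsub>PQ G\<^esub> f')"
  unfolding decomp_def
proof (intro ballI)
  fix v x
  assume v: "v \<in> thompsonV" and x: "x \<in> Q2"
  have y: "finv v x \<in> Q2"
    using thompsonV_finv_Q2 v x by blast
  show "(c \<otimes>\<^bsub>CocG G\<^esub> d) v x
      = sC G (z \<otimes> z') v x \<otimes> (f \<otimes>\<^bsub>PQ G\<^esub> f') x \<otimes> inv (f \<otimes>\<^bsub>PQ G\<^esub> f') (finv v x)"
    using c(1)[unfolded decomp_def, rule_format, OF v x] d(1)[unfolded decomp_def, rule_format, OF v x]
      v x y c(2,3) d(2,3)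
    by (simp add: CocG_mult PQ_mult sC_apply int_pow_distrib PQ_closed inv_mult m_ac)
qed

lemma Phi_decomp:
  assumes "c \<in> Coc G"
  shows "\<exists>z\<in>carrier G. \<exists>f\<in>carrier (PQ G). decomp G c z f \<and> Phi G c = (z, constQ G #>\<^bsub>PQ G\<^esub> f)"
  using decomp_exists[OF assms] Coc_closed[OF assms tau_in_thompsonV zeros_in_Q2] Phi_eq by blast

lemma Phi_in_carrier: "c \<in> Coc G \<Longrightarrow> Phi G c \<in> carrier (G \<times>\<times> (PQ G Mod constQ G))"
  using Phi_decomp by (fastforce simp: carrier_FactGroup)

lemma Phi_mult:
  assumes "c \<in> Coc G" "d \<in> Coc G"
  shows "Phi G (c \<otimes>\<^bsub>CocG G\<^esub> d) = Phi G c \<otimes>\<^bsub>G \<times>\<times> (PQ G Mod constQ G)\<^esub> Phi G d"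
proof -
  obtain z f z' f' where zf: "z \<in> carrier G" "f \<in> carrier (PQ G)" "decomp G c z f"
    "Phi G c = (z, constQ G #>\<^bsub>PQ G\<^esub> f)"
    and zf': "z' \<in> carrier G" "f' \<in> carrier (PQ G)" "decomp G d z' f'"
    "Phi G d = (z', constQ G #>\<^bsub>PQ G\<^esub> f')"
    using Phi_decomp assms by meson
  have "Phi G (c \<otimes>\<^bsub>CocG G\<^esub> d) = (z \<otimes> z', constQ G #>\<^bsub>PQ G\<^esub> (f \<otimes>\<^bsub>PQ G\<^esub> f'))"
    using Phi_eq decomp_mult[OF zf(3,1,2) zf'(3,1,2)] zf zf' by simp
  then show ?thesis
    using zf(4) zf'(4) normal.rcos_sum[OF constQ_normal zf(2) zf'(2)] by simp
qed

lemma inj_on_Phi: "inj_on (Phi G) (Coc G)"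
proof (rule inj_onI)
  fix c d
  assume c: "c \<in> Coc G" and d: "d \<in> Coc G" and eq: "Phi G c = Phi G d"
  obtain z f z' f' where zf: "z \<in> carrier G" "f \<in> carrier (PQ G)" "decomp G c z f"
    "Phi G c = (z, constQ G #>\<^bsub>PQ G\<^esub> f)"
    and zf': "z' \<in> carrier G" "f' \<in> carrier (PQ G)" "decomp G d z' f'"
    "Phi G d = (z', constQ G #>\<^bsub>PQ G\<^esub> f')"
    using Phi_decomp c d by meson
  have "z' = z" "f' \<in> constQ G #>\<^bsub>PQ G\<^esub> f"
    using eq zf(4) zf'(4) PQ.repr_independenceD[OF constQ_subgroup zf'(2)] by auto
  then obtain a where a: "a \<in> carrier G" "f' = (\<lambda>x\<in>Q2. a) \<otimes>\<^bsub>PQ G\<^esub> f"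
    by (auto simp: r_coset_def constQ_def)
  then have "f' = (\<lambda>x\<in>Q2. a \<otimes> f x)"
    by (simp add: PQ_mult cong: restrict_cong)
  then have "coboundary G f' = coboundary G f"
    using coboundary_mult_const zf(2) a(1) by simp
  then show "c = d"
    using c d zf(3) zf'(3) decomp_iff[OF zf(1,2)] decomp_iff[OF zf'(1,2)] \<open>z' = z\<close>
    by (intro Coc_eqI) auto
qed

lemma Phi_surj: "carrier (G \<times>\<times> (PQ G Mod constQ G)) \<subseteq> Phi G ` Coc G"
proof
  fix p
  assume "p \<in> carrier (G \<times>\<times> (PQ G Mod constQ G))"
  then obtain z f where p: "p = (z, constQ G #>\<^bsub>PQ G\<^esub> f)" "z \<in> carrier G" "f \<in> carrier (PQ G)"
    by (auto simp: carrier_FactGroup)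
  define c where "c = (\<lambda>v\<in>thompsonV. \<lambda>x\<in>Q2. sC G z v x \<otimes> coboundary G f v x)"
  have "c \<in> Coc G"
    unfolding c_def using Coc_mult_closed[OF sC_in_Coc[OF p(2)] coboundary_in_Coc[OF p(3)]] .
  moreover have "decomp G c z f"
    using decomp_iff[OF p(2,3)] by (simp add: c_def)
  ultimately show "p \<in> Phi G ` Coc G"
    using Phi_eq p by force
qed

lemma Phi_iso: "Phi G \<in> iso (CocG G) (G \<times>\<times> (PQ G Mod constQ G))"
proof -
  have carrier: "carrier (CocG G) = Coc G"
    by (simp add: CocG_def)
  have "Phi G \<in> hom (CocG G) (G \<times>\<times> (PQ G Mod constQ G))"
    using Phi_in_carrier Phi_mult unfolding carrier by (intro homI) (simp_all only: carrier)
  moreover have "Phi G ` Coc G = carrier (G \<times>\<times> (PQ G Mod constQ G))"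
    using Phi_surj Phi_in_carrier by blast
  ultimately show ?thesis
    using inj_on_Phi by (simp add: iso_def bij_betw_def CocG_def)
qed

end

theorem mainTheorem16:
  fixes L :: "('a, 'b) monoid_scheme"
  assumes "comm_group L"
  shows "comm_group (CocG L) \<and>
    (\<forall>z\<in>carrier L. sC L z \<in> Coc L) \<and>
    (\<forall>c\<in>Coc L. (\<exists>z\<in>carrier L. \<exists>f\<in>carrier (PQ L). decomp L c z f) \<and>
           (\<forall>z f z' f'. z \<in> carrier L \<and> f \<in> carrier (PQ L) \<and> z' \<in> carrier L \<and> f' \<in> carrier (PQ L)
              \<and> decomp L c z f \<and> decomp L c z' f' \<longrightarrow>
              z = z' \<and> (\<exists>a\<in>carrier L. \<forall>x\<in>Q2. f' x = f x \<otimes>\<^bsub>L\<^esub> a))) \<and>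
    Phi L \<in> iso (CocG L) (L \<times>\<times> (PQ L Mod constQ L))"
proof -
  interpret comm_group L
    by (rule assms)
  have "\<exists>z\<in>carrier L. \<exists>f\<in>carrier (PQ L). decomp L c z f" if "c \<in> Coc L" for c
    using decomp_exists[OF that] Coc_closed[OF that tau_in_thompsonV zeros_in_Q2] by blast
  then show ?thesis
    using CocG_comm_group sC_in_Coc decomp_unique Phi_iso by blast
qed

end
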